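(* Let $E$ be a Dedekind complete Riesz space with weak order unit $e$, let $T$ be a conditional expectation operator on $E$ with $Te=e$, and assume $E$ is $T$-universally complete ($E=L^1(T)$). Let $U$ and $V$ be conditional expectation operators on $E$ compatible with $T$. Then for every $f\in R(V)\cap L^\infty(T)$, $$\|Uf-Tf\|_{T,1}\le 4\,\alpha_T(U,V)\,\|f\|_{T,\infty}.$$
   Context: A conditional expectation operator on a Dedekind complete Riesz space $E$ with weak order unit is a positive, order continuous, linear projection $T:E\to E$ whose range $R(T)$ is a Dedekind complete Riesz subspace of $E$ and such that $Te$ is a weak order unit of $E$ for every weak order unit $e$ of $E$. $E^u$ denotes the universal completion of $E$. $E$ is $T$-universally complete if for every upwards directed net $(f_\alpha)$ in $E_+$ with $(Tf_\alpha)$ order bounded in $E^u$, the net $(f_\alpha)$ is order convergent in $E$; then $L^1(T):=E$. Products are taken in the $f$-algebra $E^u$ with multiplicative unit $e$. $L^\infty(T):=\{f\in L^1(T): |f|\le g\text{ for some } g\in R(T)_+\}$, $\|f\|_{T,1}:=T|f|$, $\|f\|_{T,\infty}:=\inf\{g\in R(T)_+:|f|\le g\}$. A conditional expectation operator $U$ on $E$ is compatible with $T$ if $TU=T=UT$; $\mathcal{B}(U)$ is the set of band projections $P$ on $E$ with $Pe\in R(U)$. $\alpha_T(U,V):=\sup\{|TPQe-TPe\cdot TQe| : P\in\mathcal{B}(U),\ Q\in\mathcal{B}(V)\}$ (supremum in the order of $E$). *)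

theory Defs
  imports Main "HOL-Library.Lattice_Algebras"
begin

(* In the theorem it will additionally be conditionally complete (= Dedekind complete),
   laterally complete, and carry an f-algebra multiplication m with unit e:
   'a plays the role of the universal completion E^u, and E is a subset of 'a. *)

definition vabs :: "'a::lattice_ab_group_add \<Rightarrow> 'a" where
  "vabs x = sup x (- x)"

definition vdisj :: "'a::lattice_ab_group_add \<Rightarrow> 'a \<Rightarrow> bool" where
  "vdisj x y \<longleftrightarrow> inf (vabs x) (vabs y) = 0"

definition riesz_subspace :: "'a::{ordered_real_vector,lattice_ab_group_add} set \<Rightarrow> bool" where
  "riesz_subspace A \<longleftrightarrow> 0 \<in> A \<and> (\<forall>x\<in>A. \<forall>y\<in>A. x + y \<in> A) \<and>
     (\<forall>c::real. \<forall>x\<in>A. c *\<^sub>R x \<in> A) \<and> (\<forall>x\<in>A. \<forall>y\<in>A. sup x y \<in> A)"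

definition is_lub_in :: "'a::order set \<Rightarrow> 'a set \<Rightarrow> 'a \<Rightarrow> bool" where
  "is_lub_in A S s \<longleftrightarrow> s \<in> A \<and> (\<forall>x\<in>S. x \<le> s) \<and> (\<forall>b\<in>A. (\<forall>x\<in>S. x \<le> b) \<longrightarrow> s \<le> b)"

definition is_glb_in :: "'a::order set \<Rightarrow> 'a set \<Rightarrow> 'a \<Rightarrow> bool" where
  "is_glb_in A S s \<longleftrightarrow> s \<in> A \<and> (\<forall>x\<in>S. s \<le> x) \<and> (\<forall>b\<in>A. (\<forall>x\<in>S. b \<le> x) \<longrightarrow> b \<le> s)"

definition sup_in :: "'a::order set \<Rightarrow> 'a set \<Rightarrow> 'a" where
  "sup_in A S = (THE s. is_lub_in A S s)"

definition inf_in :: "'a::order set \<Rightarrow> 'a set \<Rightarrow> 'a" where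
  "inf_in A S = (THE s. is_glb_in A S s)"

definition dedekind_complete_in :: "'a::order set \<Rightarrow> bool" where
  "dedekind_complete_in A \<longleftrightarrow>
     (\<forall>S. S \<subseteq> A \<and> S \<noteq> {} \<and> (\<exists>b\<in>A. \<forall>x\<in>S. x \<le> b) \<longrightarrow> (\<exists>s. is_lub_in A S s))"

definition up_directed :: "'a::order set \<Rightarrow> bool" where
  "up_directed D \<longleftrightarrow> (\<forall>x\<in>D. \<forall>y\<in>D. \<exists>z\<in>D. x \<le> z \<and> y \<le> z)"

definition down_directed :: "'a::order set \<Rightarrow> bool" where
  "down_directed D \<longleftrightarrow> (\<forall>x\<in>D. \<forall>y\<in>D. \<exists>z\<in>D. z \<le> x \<and> z \<le> y)"

definition order_dense :: "'a::{ordered_real_vector,lattice_ab_group_add} set \<Rightarrow> bool" where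
  "order_dense E \<longleftrightarrow> (\<forall>x. 0 < x \<longrightarrow> (\<exists>y\<in>E. 0 < y \<and> y \<le> x))"

text \<open>Lateral completeness of the ambient space: every set of pairwise disjoint positive
  elements is bounded above (hence has a supremum, the space being Dedekind complete).\<close>
definition laterally_complete :: "'a::{ordered_real_vector,lattice_ab_group_add} itself \<Rightarrow> bool" where
  "laterally_complete TYPE('a) \<longleftrightarrow>
     (\<forall>S::'a set. (\<forall>x\<in>S. 0 \<le> x) \<and> (\<forall>x\<in>S. \<forall>y\<in>S. x \<noteq> y \<longrightarrow> vdisj x y) \<longrightarrow> bdd_above S)"

definition f_algebra_unit :: "('a::{ordered_real_vector,lattice_ab_group_add} \<Rightarrow> 'a \<Rightarrow> 'a) \<Rightarrow> 'a \<Rightarrow> bool" where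
  "f_algebra_unit m e \<longleftrightarrow>
     (\<forall>x y z. m (x + y) z = m x z + m y z) \<and>
     (\<forall>x y z. m x (y + z) = m x y + m x z) \<and>
     (\<forall>c x y. m (c *\<^sub>R x) y = c *\<^sub>R m x y \<and> m x (c *\<^sub>R y) = c *\<^sub>R m x y) \<and>
     (\<forall>x y z. m (m x y) z = m x (m y z)) \<and>
     (\<forall>x y. 0 \<le> x \<and> 0 \<le> y \<longrightarrow> 0 \<le> m x y) \<and>
     (\<forall>x y z. 0 \<le> x \<and> 0 \<le> y \<and> 0 \<le> z \<and> inf x y = 0 \<longrightarrow>
        inf (m x z) y = 0 \<and> inf (m z x) y = 0) \<and>
     (\<forall>x. m e x = x \<and> m x e = x)"

definition weak_order_unit_in :: "'a::{ordered_real_vector,lattice_ab_group_add} set \<Rightarrow> 'a \<Rightarrow> bool" where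
  "weak_order_unit_in E w \<longleftrightarrow> w \<in> E \<and> 0 \<le> w \<and> (\<forall>x\<in>E. inf (vabs x) w = 0 \<longrightarrow> x = 0)"

definition linear_on :: "'a::{ordered_real_vector,lattice_ab_group_add} set \<Rightarrow> ('a \<Rightarrow> 'a) \<Rightarrow> bool" where
  "linear_on E T \<longleftrightarrow> (\<forall>x\<in>E. \<forall>y\<in>E. T (x + y) = T x + T y) \<and> (\<forall>c::real. \<forall>x\<in>E. T (c *\<^sub>R x) = c *\<^sub>R T x)"

definition positive_on :: "'a::{ordered_real_vector,lattice_ab_group_add} set \<Rightarrow> ('a \<Rightarrow> 'a) \<Rightarrow> bool" where
  "positive_on E T \<longleftrightarrow> (\<forall>x\<in>E. 0 \<le> x \<longrightarrow> 0 \<le> T x)"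

text \<open>Order continuity (for positive operators): x_alpha decreasing to 0 implies T x_alpha decreasing to 0,
  expressed with downward directed sets (ranges of decreasing nets).\<close>
definition order_continuous_on :: "'a::{ordered_real_vector,lattice_ab_group_add} set \<Rightarrow> ('a \<Rightarrow> 'a) \<Rightarrow> bool" where
  "order_continuous_on E T \<longleftrightarrow>
     (\<forall>D. D \<subseteq> E \<and> D \<noteq> {} \<and> down_directed D \<and> is_glb_in E D 0 \<longrightarrow> is_glb_in E (T ` D) 0)"

definition cond_exp :: "'a::{ordered_real_vector,lattice_ab_group_add} set \<Rightarrow> ('a \<Rightarrow> 'a) \<Rightarrow> bool" where
  "cond_exp E T \<longleftrightarrow> T ` E \<subseteq> E \<and> linear_on E T \<and> positive_on E T \<and> order_continuous_on E T \<and>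
     (\<forall>x\<in>E. T (T x) = T x) \<and> riesz_subspace (T ` E) \<and> dedekind_complete_in (T ` E) \<and>
     (\<forall>w. weak_order_unit_in E w \<longrightarrow> weak_order_unit_in E (T w))"

text \<open>T-universal completeness: every upwards directed net in E_+ whose image under T is order bounded
  in the universal completion is order convergent in E (for increasing nets: has a supremum in E).\<close>
definition T_universally_complete :: "'a::{ordered_real_vector,lattice_ab_group_add} set \<Rightarrow> ('a \<Rightarrow> 'a) \<Rightarrow> bool" where
  "T_universally_complete E T \<longleftrightarrow>
     (\<forall>D. D \<subseteq> E \<and> D \<noteq> {} \<and> (\<forall>x\<in>D. 0 \<le> x) \<and> up_directed D \<and> bdd_above (T ` D) \<longrightarrow>
        (\<exists>s. is_lub_in E D s))"

definition compatible :: "'a::{ordered_real_vector,lattice_ab_group_add} set \<Rightarrow> ('a \<Rightarrow> 'a) \<Rightarrow> ('a \<Rightarrow> 'a) \<Rightarrow> bool" where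
  "compatible E T U \<longleftrightarrow> (\<forall>x\<in>E. T (U x) = T x \<and> U (T x) = T x)"

definition band_in :: "'a::{ordered_real_vector,lattice_ab_group_add} set \<Rightarrow> 'a set \<Rightarrow> bool" where
  "band_in E B \<longleftrightarrow> B \<subseteq> E \<and> riesz_subspace B \<and>
     (\<forall>x\<in>E. \<forall>y\<in>B. vabs x \<le> vabs y \<longrightarrow> x \<in> B) \<and>
     (\<forall>S s. S \<subseteq> B \<and> is_lub_in E S s \<longrightarrow> s \<in> B)"

definition disj_compl :: "'a::{ordered_real_vector,lattice_ab_group_add} set \<Rightarrow> 'a set \<Rightarrow> 'a set" where
  "disj_compl E B = {x\<in>E. \<forall>y\<in>B. vdisj x y}"

definition band_projection :: "'a::{ordered_real_vector,lattice_ab_group_add} set \<Rightarrow> ('a \<Rightarrow> 'a) \<Rightarrow> bool" where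
  "band_projection E P \<longleftrightarrow> (\<exists>B. band_in E B \<and> (\<forall>x\<in>E. P x \<in> B \<and> x - P x \<in> disj_compl E B))"

definition BP :: "'a::{ordered_real_vector,lattice_ab_group_add} set \<Rightarrow> 'a \<Rightarrow> ('a \<Rightarrow> 'a) \<Rightarrow> ('a \<Rightarrow> 'a) set" where
  "BP E e U = {P. band_projection E P \<and> P e \<in> U ` E}"

definition alphaT :: "'a::{ordered_real_vector,lattice_ab_group_add} set \<Rightarrow> ('a \<Rightarrow> 'a \<Rightarrow> 'a) \<Rightarrow> 'a \<Rightarrow>
    ('a \<Rightarrow> 'a) \<Rightarrow> ('a \<Rightarrow> 'a) \<Rightarrow> ('a \<Rightarrow> 'a) \<Rightarrow> 'a" where
  "alphaT E m e T U V = sup_in E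
     {vabs (T (P (Q e)) - m (T (P e)) (T (Q e))) | P Q. P \<in> BP E e U \<and> Q \<in> BP E e V}"

definition Linfty :: "'a::{ordered_real_vector,lattice_ab_group_add} set \<Rightarrow> ('a \<Rightarrow> 'a) \<Rightarrow> 'a set" where
  "Linfty E T = {f\<in>E. \<exists>g\<in>T ` E. 0 \<le> g \<and> vabs f \<le> g}"

definition normT1 :: "('a::{ordered_real_vector,lattice_ab_group_add} \<Rightarrow> 'a) \<Rightarrow> 'a \<Rightarrow> 'a" where
  "normT1 T f = T (vabs f)"

definition normTinf :: "'a::{ordered_real_vector,lattice_ab_group_add} set \<Rightarrow> ('a \<Rightarrow> 'a) \<Rightarrow> 'a \<Rightarrow> 'a" where
  "normTinf E T f = inf_in (T ` E) {g \<in> T ` E. 0 \<le> g \<and> vabs f \<le> g}"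

end

theory Submission
  imports Defs
begin

text \<open>Put \<open>h = U f - T f\<close>. Since \<open>T h = 0\<close>, \<open>T\<bar>h\<bar> = 2 T(P h)\<close> for the band projection \<open>P\<close>
  onto the band of \<open>h\<^sup>+\<close>, and \<open>P e \<in> R(U)\<close> because \<open>h \<in> R(U)\<close>. A conditional expectation \<open>W\<close>
  commutes with every band projection \<open>P\<close> with \<open>P e \<in> R(W)\<close>, and has the averaging property
  \<open>W(x k) = (W x) k\<close> for \<open>k \<in> R(W)\<close>. Together these give \<open>T(P h) = T(r f)\<close> for
  \<open>r = V(P e) - T(P e)\<close>, hence \<open>T\<bar>h\<bar> \<le> 2 T\<bar>r\<bar> \<parallel>f\<parallel>\<^sub>T\<^sub>,\<^sub>\<infinity>\<close>. The same argument for
  \<open>r \<in> R(V)\<close> and the projection \<open>Q\<close> onto the band of \<open>r\<^sup>+\<close> gives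
  \<open>T\<bar>r\<bar> = 2 T(Q r) = 2 (T P Q e - T P e \<cdot> T Q e) \<le> 2 \<alpha>\<close>.

  The averaging property is proved for bounded \<open>k\<close> by repeatedly peeling off a layer of height
  \<open>\<epsilon>\<close>, and for general \<open>k\<close> by truncation.\<close>

section \<open>Riesz space arithmetic\<close>

lemma vabs_eq_pprt_minus_nprt: "vabs (x::'a::lattice_ab_group_add) = pprt x - nprt x"
proof -
  have "0 \<le> sup x (- x)"
    using add_mono[OF sup.cobounded1[of x "-x"] sup.cobounded2[of "-x" x]] by simp
  moreover have "sup x 0 + (- x) = sup 0 (- x)"
    using add_sup_distrib_right[of x 0 "- x"] by simp
  moreover have "pprt x - nprt x = sup (sup x 0 + (- x)) (sup x 0 + 0)"
    by (simp add: pprt_def nprt_def neg_inf_eq_sup add_sup_distrib_left)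
  ultimately show ?thesis
    by (simp add: vabs_def sup_aci sup.absorb1 sup.absorb2)
qed

lemma vabs_nonneg [simp]: "0 \<le> vabs (x::'a::lattice_ab_group_add)"
  using order_trans[OF nprt_le_zero zero_le_pprt, of x] by (simp add: vabs_eq_pprt_minus_nprt)

lemma vabs_of_nonneg [simp]: "0 \<le> (x::'a::lattice_ab_group_add) \<Longrightarrow> vabs x = x"
  by (simp add: vabs_eq_pprt_minus_nprt)

lemma vabs_ge: "(x::'a::lattice_ab_group_add) \<le> vabs x" "- x \<le> vabs x"
  by (simp_all add: vabs_def)

lemma vabs_le_iff: "vabs (x::'a::lattice_ab_group_add) \<le> c \<longleftrightarrow> x \<le> c \<and> - x \<le> c"
  by (simp add: vabs_def)

lemma vabs_minus [simp]: "vabs (- (x::'a::lattice_ab_group_add)) = vabs x"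
  by (simp add: vabs_def sup_commute)

lemma vabs_eq_0_iff: "vabs (x::'a::lattice_ab_group_add) = 0 \<longleftrightarrow> x = 0"
  by (simp add: vabs_def)

lemma vabs_triangle: "vabs ((x::'a::lattice_ab_group_add) + y) \<le> vabs x + vabs y"
  unfolding vabs_le_iff by (metis add_mono minus_add_distrib vabs_ge)

lemma vabs_diff_le: "vabs ((x::'a::lattice_ab_group_add) - y) \<le> vabs x + vabs y"
  by (metis diff_conv_add_uminus vabs_minus vabs_triangle)

lemma vabs_diff_le_of_nonneg:
  fixes a b w :: "'a::lattice_ab_group_add"
  assumes "0 \<le> a" "a \<le> w" "0 \<le> b" "b \<le> w"
  shows "vabs (a - b) \<le> w"
  using assms unfolding vabs_le_iff by (auto simp: diff_le_eq intro: add_increasing2)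

lemma pprt_le_vabs: "pprt (x::'a::lattice_ab_group_add) \<le> vabs x"
  by (simp add: vabs_eq_pprt_minus_nprt)

lemma minus_nprt_le_vabs: "- nprt (x::'a::lattice_ab_group_add) \<le> vabs x"
  by (simp add: vabs_eq_pprt_minus_nprt)

lemma minus_nprt_eq_sup: "- nprt (x::'a::lattice_ab_group_add) = sup (- x) 0"
  by (simp add: nprt_def neg_inf_eq_sup)

lemma inf_add_le_add_inf:
  fixes a b c :: "'a::lattice_ab_group_add"
  assumes "0 \<le> a" "0 \<le> b" "0 \<le> c"
  shows "inf a (b + c) \<le> inf a b + inf a c"
proof -
  have "inf a b + inf a c = inf (inf (a + a) (a + c)) (inf (b + a) (b + c))"
    by (simp add: add_inf_distrib_left add_inf_distrib_right add.commute inf_aci)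
  moreover have "a \<le> a + a" "a \<le> a + c" "a \<le> b + a"
    using assms by (simp_all add: add_increasing add_increasing2)
  ultimately show ?thesis
    by (simp add: le_infI1 le_infI2)
qed

lemma inf_pprt_minus_nprt: "inf (pprt (x::'a::lattice_ab_group_add)) (- nprt x) = 0"
proof -
  have "sup (pprt x) (- nprt x) = vabs x"
    using vabs_nonneg[of x] by (simp add: minus_nprt_eq_sup pprt_def vabs_def sup_aci sup.absorb2)
  then show ?thesis
    using add_eq_inf_sup[of "pprt x" "- nprt x"] by (simp add: vabs_eq_pprt_minus_nprt)
qed

lemma add_eq_sup_if_inf_eq_0: "inf u v = 0 \<Longrightarrow> u + v = sup u (v::'a::lattice_ab_group_add)"
  using add_eq_inf_sup[of u v] by simp

lemma scaleR_sup_nonneg: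
  fixes x y :: "'a::{ordered_real_vector,lattice_ab_group_add}"
  assumes "0 \<le> c" shows "c *\<^sub>R sup x y = sup (c *\<^sub>R x) (c *\<^sub>R y)"
proof (cases "c = 0")
  case True
  then show ?thesis by simp
next
  case False
  then have c: "0 < c" using assms by simp
  show ?thesis
  proof (rule antisym)
    have "sup x y \<le> inverse c *\<^sub>R sup (c *\<^sub>R x) (c *\<^sub>R y)"
    proof (rule sup_least)
      have "x = inverse c *\<^sub>R (c *\<^sub>R x)" using c by simp
      also have "\<dots> \<le> inverse c *\<^sub>R sup (c *\<^sub>R x) (c *\<^sub>R y)"
        using c by (intro scaleR_left_mono) auto
      finally show "x \<le> inverse c *\<^sub>R sup (c *\<^sub>R x) (c *\<^sub>R y)" .
      have "y = inverse c *\<^sub>R (c *\<^sub>R y)" using c by simp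
      also have "\<dots> \<le> inverse c *\<^sub>R sup (c *\<^sub>R x) (c *\<^sub>R y)"
        using c by (intro scaleR_left_mono) auto
      finally show "y \<le> inverse c *\<^sub>R sup (c *\<^sub>R x) (c *\<^sub>R y)" .
    qed
    then have "c *\<^sub>R sup x y \<le> c *\<^sub>R (inverse c *\<^sub>R sup (c *\<^sub>R x) (c *\<^sub>R y))"
      using c by (intro scaleR_left_mono) auto
    then show "c *\<^sub>R sup x y \<le> sup (c *\<^sub>R x) (c *\<^sub>R y)" using c by simp
    show "sup (c *\<^sub>R x) (c *\<^sub>R y) \<le> c *\<^sub>R sup x y"
      using assms by (auto intro!: scaleR_left_mono)
  qed
qed

lemma scaleR_inf_nonneg:
  fixes x y :: "'a::{ordered_real_vector,lattice_ab_group_add}"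
  assumes "0 \<le> c" shows "c *\<^sub>R inf x y = inf (c *\<^sub>R x) (c *\<^sub>R y)"
proof -
  have "inf (c *\<^sub>R x) (c *\<^sub>R y) = - sup (- (c *\<^sub>R x)) (- (c *\<^sub>R y))"
    by (rule inf_eq_neg_sup)
  also have "\<dots> = - (c *\<^sub>R sup (-x) (-y))" using scaleR_sup_nonneg[OF assms, of "-x" "-y"] by simp
  also have "\<dots> = c *\<^sub>R (- sup (-x) (-y))" by (rule scaleR_minus_right[symmetric])
  also have "\<dots> = c *\<^sub>R inf x y"
  proof -
    have i: "inf x y = - sup (-x) (-y)" by (rule inf_eq_neg_sup)
    show ?thesis by (simp only: i scaleR_minus_right)
  qed
  finally show ?thesis by simp
qed

lemma vabs_scaleR:
  fixes x :: "'a::{ordered_real_vector,lattice_ab_group_add}"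
  shows "vabs (c *\<^sub>R x) = \<bar>c\<bar> *\<^sub>R vabs x"
proof (cases "0 \<le> c")
  case True
  then show ?thesis using scaleR_sup_nonneg[OF True, of x "-x"] by (simp add: vabs_def)
next
  case False
  then have "0 \<le> -c" by simp
  then show ?thesis using scaleR_sup_nonneg[OF \<open>0 \<le> -c\<close>, of x "-x"] False
    by (simp add: vabs_def sup_commute)
qed

lemma inf_scaleR_of_nat_eq_0:
  fixes u a :: "'a::{ordered_real_vector,lattice_ab_group_add}"
  assumes "0 \<le> u" "0 \<le> a" "inf u a = 0"
  shows "inf u (real n *\<^sub>R a) = 0"
proof (induction n)
  case (Suc n)
  have "inf u (real n *\<^sub>R a + a) \<le> inf u (real n *\<^sub>R a) + inf u a"
    using assms by (intro inf_add_le_add_inf) (auto simp: scaleR_nonneg_nonneg)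
  then have "inf u (real (Suc n) *\<^sub>R a) \<le> 0"
    using Suc assms by (simp add: algebra_simps)
  then show ?case
    using assms by (simp add: antisym scaleR_nonneg_nonneg)
qed (use assms in \<open>simp add: inf_absorb2\<close>)

text \<open>The ambient space is Archimedean because it is conditionally complete.\<close>

lemma nonneg_eq_0_if_multiples_le:
  fixes a b :: "'a::{ordered_real_vector,lattice_ab_group_add,conditionally_complete_lattice}"
  assumes "0 \<le> a" and le: "\<And>n::nat. real n *\<^sub>R a \<le> b"
  shows "a = 0"
proof -
  define S where "S = range (\<lambda>n::nat. real n *\<^sub>R a)"
  have bdd: "bdd_above S" unfolding S_def using le by (auto intro!: bdd_aboveI)
  have "real n *\<^sub>R a \<le> Sup S - a" for n
  proof -
    have "real (Suc n) *\<^sub>R a \<in> S" unfolding S_def by blast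
    then show ?thesis using cSup_upper[OF _ bdd] by (simp add: algebra_simps)
  qed
  then have "Sup S \<le> Sup S - a"
    unfolding S_def by (intro cSup_least) auto
  with assms(1) show ?thesis by simp
qed

lemma nonneg_eq_0_if_le_all_eps:
  fixes a b :: "'a::{ordered_real_vector,lattice_ab_group_add,conditionally_complete_lattice}"
  assumes a: "0 \<le> a" and le: "\<And>\<epsilon>. \<epsilon> > 0 \<Longrightarrow> a \<le> \<epsilon> *\<^sub>R b"
  shows "a = 0"
proof (rule nonneg_eq_0_if_multiples_le[OF a])
  fix n :: nat
  show "real n *\<^sub>R a \<le> b"
  proof (cases "n = 0")
    case True
    then show ?thesis using a le[of 1] by simp
  next
    case False
    then have "real n *\<^sub>R a \<le> real n *\<^sub>R (inverse (real n) *\<^sub>R b)"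
      using le[of "inverse (real n)"] by (intro scaleR_left_mono) auto
    then show ?thesis using False by simp
  qed
qed

lemma vdisj_sym: "vdisj x y \<longleftrightarrow> vdisj y x"
  by (simp add: vdisj_def inf_commute)

lemma vdisj_self_eq_0: "vdisj x x \<Longrightarrow> x = 0"
  by (simp add: vdisj_def vabs_eq_0_iff)

lemma vdisj_zero [simp]: "vdisj 0 x"
  by (simp add: vdisj_def inf_absorb1)

lemma vdisj_vabs_iff [simp]: "vdisj (vabs x) z \<longleftrightarrow> vdisj x z"
  by (simp add: vdisj_def)

lemma vdisj_of_nonneg: "0 \<le> x \<Longrightarrow> 0 \<le> y \<Longrightarrow> vdisj x y \<longleftrightarrow> inf x y = 0"
  by (simp add: vdisj_def)

lemma vdisj_mono:
  assumes "vabs x \<le> vabs y" "vdisj y z"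
  shows "vdisj x z"
proof -
  have "inf (vabs x) (vabs z) \<le> inf (vabs y) (vabs z)"
    by (rule inf_mono[OF assms(1) order_refl])
  then show ?thesis
    using assms(2) unfolding vdisj_def by (simp add: antisym)
qed

lemma vdisj_add:
  assumes "vdisj x z" "vdisj y z"
  shows "vdisj (x + y) z"
proof -
  have "inf (vabs (x + y)) (vabs z) \<le> inf (vabs x + vabs y) (vabs z)"
    by (rule inf_mono[OF vabs_triangle order_refl])
  also have "\<dots> \<le> inf (vabs x) (vabs z) + inf (vabs y) (vabs z)"
    using inf_add_le_add_inf[of "vabs z" "vabs x" "vabs y"] by (simp add: inf_commute)
  finally show ?thesis
    using assms unfolding vdisj_def by (simp add: antisym)
qed

lemma vdisj_uminus: "vdisj x z \<Longrightarrow> vdisj (- x) z"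
  by (simp add: vdisj_def)

lemma vdisj_diff: "vdisj x z \<Longrightarrow> vdisj y z \<Longrightarrow> vdisj (x - y) z"
  by (metis diff_conv_add_uminus vdisj_add vdisj_uminus)

lemma vdisj_scaleR:
  fixes x :: "'a::{ordered_real_vector,lattice_ab_group_add}"
  assumes "vdisj x z"
  shows "vdisj (c *\<^sub>R x) z"
proof -
  define K where "K = max \<bar>c\<bar> 1"
  have K: "0 \<le> K" "\<bar>c\<bar> \<le> K" "1 \<le> K" unfolding K_def by auto
  have "inf (vabs (c *\<^sub>R x)) (vabs z) \<le> inf (K *\<^sub>R vabs x) (K *\<^sub>R vabs z)"
    using K scaleR_right_mono[OF K(3) vabs_nonneg[of z]]
    by (intro inf_mono) (auto simp: vabs_scaleR intro: scaleR_right_mono)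
  also have "\<dots> = 0"
    using assms by (simp add: vdisj_def scaleR_inf_nonneg[OF K(1), symmetric])
  finally show ?thesis unfolding vdisj_def by (simp add: antisym)
qed

lemma nonneg_if_vdisj_diff:
  assumes "0 \<le> x" "vdisj a (x - a)"
  shows "0 \<le> a"
proof -
  have "sup (- a) 0 \<le> sup (x - a) 0" using assms(1) by (intro sup_mono) simp_all
  then have "- nprt a \<le> vabs (x - a)"
    unfolding minus_nprt_eq_sup using order_trans pprt_le_vabs[of "x - a", unfolded pprt_def] by blast
  then have "- nprt a \<le> inf (vabs a) (vabs (x - a))"
    by (rule le_infI[OF minus_nprt_le_vabs])
  then have "0 \<le> nprt a"
    using assms(2) unfolding vdisj_def by simp
  then have "nprt a = 0" by (rule antisym[OF nprt_le_zero])
  then show ?thesis by (simp add: zero_le_iff_zero_nprt)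
qed

lemma sup_in_eq: "is_lub_in A S s \<Longrightarrow> sup_in A S = s"
  unfolding sup_in_def by (rule the_equality) (auto simp: is_lub_in_def intro: order.antisym)

lemma inf_in_eq: "is_glb_in A S s \<Longrightarrow> inf_in A S = s"
  unfolding inf_in_def by (rule the_equality) (auto simp: is_glb_in_def intro: order.antisym)

lemma up_directed_image:
  assumes "up_directed D" "\<And>x y. x \<in> D \<Longrightarrow> y \<in> D \<Longrightarrow> x \<le> y \<Longrightarrow> f x \<le> f y"
  shows "up_directed (f ` D)"
  unfolding up_directed_def
proof (intro ballI)
  fix u v assume "u \<in> f ` D" "v \<in> f ` D"
  then obtain a b where ab: "a \<in> D" "b \<in> D" "u = f a" "v = f b" by blast
  with assms(1) obtain c where "c \<in> D" "a \<le> c" "b \<le> c" unfolding up_directed_def by blast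
  with ab assms(2) show "\<exists>z\<in>f ` D. u \<le> z \<and> v \<le> z"
    by (intro bexI[of _ "f c"]) auto
qed

locale dc_riesz_subspace =
  fixes E :: "'a::{ordered_real_vector,lattice_ab_group_add,conditionally_complete_lattice} set"
    and e :: 'a
  assumes E_riesz: "riesz_subspace E"
    and E_dc: "dedekind_complete_in E"
    and E_dense: "order_dense E"
    and e_unit: "weak_order_unit_in E e"
begin

lemma E_zero [simp]: "0 \<in> E"
  using E_riesz by (simp add: riesz_subspace_def)

lemma E_add: "x \<in> E \<Longrightarrow> y \<in> E \<Longrightarrow> x + y \<in> E"
  using E_riesz by (simp add: riesz_subspace_def)

lemma E_scaleR: "x \<in> E \<Longrightarrow> c *\<^sub>R x \<in> E"
  using E_riesz by (simp add: riesz_subspace_def)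

lemma E_sup: "x \<in> E \<Longrightarrow> y \<in> E \<Longrightarrow> sup x y \<in> E"
  using E_riesz by (simp add: riesz_subspace_def)

lemma E_uminus: "x \<in> E \<Longrightarrow> - x \<in> E"
  using E_scaleR[of x "-1"] by simp

lemma E_diff: "x \<in> E \<Longrightarrow> y \<in> E \<Longrightarrow> x - y \<in> E"
  by (metis E_add E_uminus diff_conv_add_uminus)

lemma E_inf: "x \<in> E \<Longrightarrow> y \<in> E \<Longrightarrow> inf x y \<in> E"
  by (metis E_sup E_uminus inf_eq_neg_sup)

lemma E_pprt: "x \<in> E \<Longrightarrow> pprt x \<in> E"
  unfolding pprt_def by (intro E_sup E_zero)

lemma E_nprt: "x \<in> E \<Longrightarrow> nprt x \<in> E"
  unfolding nprt_def by (intro E_inf E_zero)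

lemma E_vabs: "x \<in> E \<Longrightarrow> vabs x \<in> E"
  unfolding vabs_def by (intro E_sup E_uminus)

lemma e_in_E [simp]: "e \<in> E" and e_nonneg [simp]: "0 \<le> e"
  using e_unit by (auto simp: weak_order_unit_in_def)

lemma eq_0_if_disjoint_unit: "x \<in> E \<Longrightarrow> inf (vabs x) e = 0 \<Longrightarrow> x = 0"
  using e_unit by (auto simp: weak_order_unit_in_def)

text \<open>The supremum in \<open>E\<close> of the part of \<open>E\<close> below \<open>x\<close> can differ from \<open>x\<close> only by a positive
  element, below which order density would squeeze in a positive element of \<open>E\<close>.\<close>

lemma E_ideal:
  assumes y: "y \<in> E" and x: "0 \<le> x" "x \<le> y"
  shows "x \<in> E"
proof -
  define D where "D = {z\<in>E. 0 \<le> z \<and> z \<le> x}"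
  have "D \<subseteq> E" "D \<noteq> {}" "\<forall>z\<in>D. z \<le> y" using x by (auto simp: D_def)
  with E_dc y obtain s where "is_lub_in E D s" unfolding dedekind_complete_in_def by blast
  then have sE: "s \<in> E" and ub: "\<And>z. z \<in> D \<Longrightarrow> z \<le> s"
    and least: "\<And>b. b \<in> E \<Longrightarrow> \<forall>z\<in>D. z \<le> b \<Longrightarrow> s \<le> b"
    by (auto simp: is_lub_in_def)
  have s0: "0 \<le> s" using ub[of 0] x by (auto simp: D_def)
  have gap: "\<exists>u\<in>E. 0 < u \<and> u \<le> pprt (a - b)" if "\<not> a \<le> b" for a b :: 'a
  proof -
    have "pprt (a - b) \<noteq> 0" using that by (simp add: le_zero_iff_zero_pprt[symmetric])
    then have "0 < pprt (a - b)" by (simp add: order.not_eq_order_implies_strict)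
    then show ?thesis using E_dense unfolding order_dense_def by blast
  qed
  have sx: "s \<le> x"
  proof (rule ccontr)
    assume "\<not> s \<le> x"
    then obtain u where u: "u \<in> E" "0 < u" "u \<le> pprt (s - x)" using gap by blast
    have "inf s x = s - pprt (s - x)"
      by (simp add: pprt_def diff_sup_eq_inf add_inf_distrib_left inf_commute)
    have "z \<le> s - u" if "z \<in> D" for z
    proof -
      have "z \<le> inf s x" using ub[OF that] that by (simp add: D_def)
      also have "\<dots> \<le> s - u" using \<open>inf s x = s - pprt (s - x)\<close> u(3) by simp
      finally show ?thesis .
    qed
    then have "s \<le> s - u" using sE u(1) by (intro least E_diff) auto
    then show False using u(2) by simp
  qed
  have "x \<le> s"
  proof (rule ccontr)
    assume "\<not> x \<le> s"
    then obtain u where u: "u \<in> E" "0 < u" "u \<le> pprt (x - s)" using gap by blast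
    have "s + pprt (x - s) = x"
      using sx by (simp add: pprt_def add_sup_distrib_left sup.absorb1)
    then have "s + u \<in> D"
      using sE u s0 add_left_mono[OF u(3), of s] E_add[OF sE u(1)] by (auto simp: D_def)
    then have "s + u \<le> s" by (rule ub)
    with u(2) show False by simp
  qed
  with sx sE show ?thesis by simp
qed

lemma E_between: "a \<in> E \<Longrightarrow> b \<in> E \<Longrightarrow> a \<le> x \<Longrightarrow> x \<le> b \<Longrightarrow> x \<in> E"
  using E_ideal[of "b - a" "x - a"]
    by (metis E_add E_diff diff_add_cancel diff_ge_0_iff_ge diff_right_mono)

lemma E_Sup:
  assumes "S \<subseteq> E" "S \<noteq> {}" "b \<in> E" "\<And>x. x \<in> S \<Longrightarrow> x \<le> b"
  shows "Sup S \<in> E" "is_lub_in E S (Sup S)"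
proof -
  have bdd: "bdd_above S" using assms unfolding bdd_above_def by blast
  obtain x where "x \<in> S" using assms by auto
  then have "x \<le> Sup S" "Sup S \<le> b" using bdd assms by (auto intro: cSup_upper cSup_least)
  then show "Sup S \<in> E" using E_between[of x b] \<open>x \<in> S\<close> assms by auto
  then show "is_lub_in E S (Sup S)"
    using bdd assms unfolding is_lub_in_def by (auto intro: cSup_upper cSup_least)
qed

lemma multiples_chain:
  assumes "x \<in> E" "0 \<le> x" "a \<in> E" "0 \<le> a"
  defines "D \<equiv> range (\<lambda>n::nat. inf x (real n *\<^sub>R a))"
  shows "D \<subseteq> E" "D \<noteq> {}" "up_directed D" "\<And>z. z \<in> D \<Longrightarrow> 0 \<le> z \<and> z \<le> x"
proof -
  show "D \<subseteq> E" "D \<noteq> {}" "\<And>z. z \<in> D \<Longrightarrow> 0 \<le> z \<and> z \<le> x"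
    using assms by (auto simp: D_def scaleR_nonneg_nonneg intro!: E_inf E_scaleR)
  have mono: "inf x (real n *\<^sub>R a) \<le> inf x (real k *\<^sub>R a)" if "n \<le> k" for n k
    using that assms by (intro inf_mono scaleR_right_mono) auto
  show "up_directed D"
    unfolding up_directed_def D_def
  proof (intro ballI)
    fix u v assume "u \<in> range (\<lambda>n::nat. inf x (real n *\<^sub>R a))" "v \<in> range (\<lambda>n::nat. inf x (real n *\<^sub>R a))"
    then obtain n k where "u = inf x (real n *\<^sub>R a)" "v = inf x (real k *\<^sub>R a)" by auto
    then show "\<exists>z\<in>range (\<lambda>n::nat. inf x (real n *\<^sub>R a)). u \<le> z \<and> v \<le> z"
      using mono[of n "max n k"] mono[of k "max n k"] by auto
  qed
qed

text \<open>The component of \<open>x \<ge> 0\<close> in the principal band generated by \<open>a \<ge> 0\<close>.\<close>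

definition band_component :: "'a \<Rightarrow> 'a \<Rightarrow> 'a" where
  "band_component a x = Sup (range (\<lambda>n::nat. inf x (real n *\<^sub>R a)))"

lemma band_component:
  assumes x: "x \<in> E" "0 \<le> x" and a: "a \<in> E" "0 \<le> a"
  shows "band_component a x \<in> E" "0 \<le> band_component a x" "band_component a x \<le> x"
    "inf (x - band_component a x) a = 0"
proof -
  define D where "D = range (\<lambda>n::nat. inf x (real n *\<^sub>R a))"
  note D = multiples_chain[OF x a, folded D_def]
  have c: "band_component a x = Sup D" unfolding band_component_def D_def ..
  have bdd: "bdd_above D" using D(4) by (meson bdd_aboveI)
  have up: "inf x (real n *\<^sub>R a) \<le> Sup D" for n
    using cSup_upper[OF _ bdd] unfolding D_def by blast
  show "band_component a x \<in> E" using E_Sup(1)[OF D(1,2) x(1)] D(4) unfolding c by blast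
  show "0 \<le> band_component a x" using up[of 0] x unfolding c by (simp add: inf_absorb2)
  show le: "band_component a x \<le> x" using D(2,4) unfolding c by (meson cSup_least)
  define v where "v = inf (x - Sup D) a"
  have v0: "0 \<le> v" using le a unfolding v_def c by simp
  have "inf x (real n *\<^sub>R a) \<le> Sup D - v" for n
  proof -
    have "inf x (real n *\<^sub>R a) + v \<le> x"
      using add_mono[OF up[of n] inf.cobounded1[of "x - Sup D" a]] by (simp add: v_def)
    moreover have "inf x (real n *\<^sub>R a) + v \<le> real (Suc n) *\<^sub>R a"
      using add_mono[OF inf.cobounded2[of x "real n *\<^sub>R a"] inf.cobounded2[of "x - Sup D" a]]
      by (simp add: v_def algebra_simps)
    ultimately have "inf x (real n *\<^sub>R a) + v \<le> inf x (real (Suc n) *\<^sub>R a)"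
      by simp
    then show ?thesis
      using order_trans[OF _ up[of "Suc n"]] by (simp add: algebra_simps)
  qed
  then have "Sup D \<le> Sup D - v" unfolding D_def by (intro cSup_least) auto
  then have "v \<le> 0" by simp
  then have "v = 0" using v0 by (rule antisym)
  then show "inf (x - band_component a x) a = 0" unfolding v_def c .
qed

lemma band_component_vdisj:
  assumes x: "x \<in> E" "0 \<le> x" and a: "a \<in> E" "0 \<le> a" and y: "vdisj y a"
  shows "vdisj (band_component a x) y"
proof -
  define D where "D = range (\<lambda>n::nat. inf x (real n *\<^sub>R a))"
  note D = multiples_chain[OF x a, folded D_def]
  have c: "band_component a x = Sup D" unfolding band_component_def D_def ..
  have bdd: "bdd_above D" using D(4) by (meson bdd_aboveI)
  have ya: "inf (vabs y) a = 0" using y a unfolding vdisj_def by simp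
  define t where "t = inf (Sup D) (vabs y)"
  have t0: "0 \<le> t" using band_component(2)[OF x a] unfolding t_def c by simp
  have "d \<le> Sup D - t" if d: "d \<in> D" for d
  proof -
    obtain n where n: "d = inf x (real n *\<^sub>R a)" using d unfolding D_def by blast
    have "inf d t \<le> inf (real n *\<^sub>R a) (vabs y)" unfolding n t_def by (intro inf_mono) auto
    also have "\<dots> = 0" using inf_scaleR_of_nat_eq_0[OF vabs_nonneg a(2) ya] by (simp add: inf_commute)
    finally have "inf d t \<le> 0" .
    moreover have "0 \<le> inf d t" using D(4)[OF d] t0 by simp
    ultimately have "d + t = sup d t" by (intro add_eq_sup_if_inf_eq_0 antisym)
    also have "\<dots> \<le> Sup D" using cSup_upper[OF d bdd] t_def by simp
    finally show ?thesis by (simp add: algebra_simps)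
  qed
  then have "Sup D \<le> Sup D - t" using D(2) by (intro cSup_least) auto
  then have "t \<le> 0" by simp
  then have "inf (Sup D) (vabs y) = 0" using t0 unfolding t_def by (rule antisym)
  moreover have "vabs (Sup D) = Sup D" using band_component(2)[OF x a] unfolding c by simp
  ultimately show ?thesis unfolding vdisj_def c by (simp only:)
qed

lemma band_component_unit:
  assumes "x \<in> E" "0 \<le> x"
  shows "band_component e x = x"
proof -
  note c = band_component[OF assms e_in_E e_nonneg]
  have "x - band_component e x \<in> E" using assms(1) c(1) by (rule E_diff)
  moreover have "inf (vabs (x - band_component e x)) e = 0" using c(3,4) by simp
  ultimately have "x - band_component e x = 0" by (rule eq_0_if_disjoint_unit)
  then show ?thesis by simp
qed

end

section \<open>Band projections\<close>

context dc_riesz_subspace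
begin

lemma band_in_closed:
  assumes "band_in E B"
  shows "B \<subseteq> E" "0 \<in> B" "\<And>x y. x \<in> B \<Longrightarrow> y \<in> B \<Longrightarrow> x + y \<in> B"
    "\<And>x c. x \<in> B \<Longrightarrow> c *\<^sub>R x \<in> B" "\<And>x y. x \<in> B \<Longrightarrow> y \<in> B \<Longrightarrow> x - y \<in> B"
    "\<And>x y. x \<in> E \<Longrightarrow> y \<in> B \<Longrightarrow> vabs x \<le> vabs y \<Longrightarrow> x \<in> B"
proof -
  show "B \<subseteq> E" "0 \<in> B" "\<And>x y. x \<in> B \<Longrightarrow> y \<in> B \<Longrightarrow> x + y \<in> B"
    "\<And>x c. x \<in> B \<Longrightarrow> c *\<^sub>R x \<in> B"
    "\<And>x y. x \<in> E \<Longrightarrow> y \<in> B \<Longrightarrow> vabs x \<le> vabs y \<Longrightarrow> x \<in> B"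
    using assms by (auto simp: band_in_def riesz_subspace_def)
  then show "\<And>x y. x \<in> B \<Longrightarrow> y \<in> B \<Longrightarrow> x - y \<in> B"
    by (metis diff_conv_add_uminus scaleR_minus1_left)
qed

lemma disj_compl_closed:
  shows "disj_compl E B \<subseteq> E" "0 \<in> disj_compl E B"
    "\<And>x y. x \<in> disj_compl E B \<Longrightarrow> y \<in> disj_compl E B \<Longrightarrow> x + y \<in> disj_compl E B"
    "\<And>x c. x \<in> disj_compl E B \<Longrightarrow> c *\<^sub>R x \<in> disj_compl E B"
    "\<And>x y. x \<in> disj_compl E B \<Longrightarrow> y \<in> disj_compl E B \<Longrightarrow> x - y \<in> disj_compl E B"
    "\<And>x y. x \<in> E \<Longrightarrow> y \<in> disj_compl E B \<Longrightarrow> vabs x \<le> vabs y \<Longrightarrow> x \<in> disj_compl E B"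
    "\<And>x y. x \<in> disj_compl E B \<Longrightarrow> y \<in> B \<Longrightarrow> vdisj x y"
proof -
  show "disj_compl E B \<subseteq> E" "0 \<in> disj_compl E B"
    "\<And>x y. x \<in> disj_compl E B \<Longrightarrow> y \<in> B \<Longrightarrow> vdisj x y"
    unfolding disj_compl_def by auto
  show "\<And>x y. x \<in> disj_compl E B \<Longrightarrow> y \<in> disj_compl E B \<Longrightarrow> x + y \<in> disj_compl E B"
    unfolding disj_compl_def using vdisj_add E_add by blast
  show "\<And>x c. x \<in> disj_compl E B \<Longrightarrow> c *\<^sub>R x \<in> disj_compl E B"
    unfolding disj_compl_def using vdisj_scaleR E_scaleR by blast
  show "\<And>x y. x \<in> disj_compl E B \<Longrightarrow> y \<in> disj_compl E B \<Longrightarrow> x - y \<in> disj_compl E B"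
    unfolding disj_compl_def using vdisj_diff E_diff by blast
  show "\<And>x y. x \<in> E \<Longrightarrow> y \<in> disj_compl E B \<Longrightarrow> vabs x \<le> vabs y \<Longrightarrow> x \<in> disj_compl E B"
    unfolding disj_compl_def using vdisj_mono by blast
qed

lemma band_decomposition_unique:
  assumes "band_in E B" "b \<in> B" "b' \<in> B" "c \<in> disj_compl E B" "c' \<in> disj_compl E B"
    and "b + c = b' + c'"
  shows "b = b'"
proof -
  have "b - b' = c' - c" using assms(6) by (simp add: algebra_simps)
  then have "vdisj (b - b') (b - b')"
    using assms(1-5) band_in_closed(5) disj_compl_closed(5,7) by metis
  then have "b - b' = 0" by (rule vdisj_self_eq_0)
  then show ?thesis by simp
qed

end

locale band_proj = dc_riesz_subspace +
  fixes P
  assumes band_projection: "band_projection E P"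
begin

lemma band_range: "band_in E (P ` E)" and compl_disj: "x \<in> E \<Longrightarrow> x - P x \<in> disj_compl E (P ` E)"
proof -
  obtain B where B: "band_in E B" and PB: "\<And>x. x \<in> E \<Longrightarrow> P x \<in> B"
    and PC: "\<And>x. x \<in> E \<Longrightarrow> x - P x \<in> disj_compl E B"
    using band_projection unfolding band_projection_def by blast
  have "b \<in> P ` E" if "b \<in> B" for b
  proof -
    have bE: "b \<in> E" using that band_in_closed(1)[OF B] by blast
    have "P b = b"
      using band_decomposition_unique[OF B PB[OF bE] that PC[OF bE] disj_compl_closed(2)] by simp
    then show ?thesis using bE by force
  qed
  then have "P ` E = B" using PB by blast
  then show "band_in E (P ` E)" "x \<in> E \<Longrightarrow> x - P x \<in> disj_compl E (P ` E)"
    using B PC by auto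
qed

lemma closed: "x \<in> E \<Longrightarrow> P x \<in> E"
  using band_in_closed(1)[OF band_range] by blast

lemma eqI:
  assumes "x \<in> E" "b \<in> P ` E" "c \<in> disj_compl E (P ` E)" "x = b + c"
  shows "P x = b"
  using band_decomposition_unique[OF band_range _ assms(2) compl_disj[OF assms(1)] assms(3)] assms
  by (simp add: image_eqI)

lemma add:
  assumes "x \<in> E" "y \<in> E"
  shows "P (x + y) = P x + P y"
proof (rule eqI)
  show "P x + P y \<in> P ` E" using assms by (intro band_in_closed(3)[OF band_range]) auto
  show "(x - P x) + (y - P y) \<in> disj_compl E (P ` E)"
    using assms by (intro disj_compl_closed(3) compl_disj)
qed (use assms in \<open>auto intro: E_add\<close>)

lemma scaleR:
  assumes "x \<in> E"
  shows "P (c *\<^sub>R x) = c *\<^sub>R P x"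
proof (rule eqI)
  show "c *\<^sub>R P x \<in> P ` E" using assms by (intro band_in_closed(4)[OF band_range]) auto
  show "c *\<^sub>R (x - P x) \<in> disj_compl E (P ` E)"
    using assms by (intro disj_compl_closed(4) compl_disj)
qed (use assms in \<open>auto simp: scaleR_diff_right intro: E_scaleR\<close>)

lemma zero [simp]: "P 0 = 0"
  using scaleR[of 0 0] by simp

lemma minus: "x \<in> E \<Longrightarrow> P (- x) = - P x"
  using scaleR[of x "-1"] by simp

lemma diff: "x \<in> E \<Longrightarrow> y \<in> E \<Longrightarrow> P (x - y) = P x - P y"
  using add[of x "- y"] minus[of y] by (simp add: E_uminus)

lemma fixes_range:
  assumes "y \<in> P ` E"
  shows "P y = y"
proof (rule eqI[where c = 0])
  show "y \<in> E" using assms closed by blast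
  show "y \<in> P ` E" by (rule assms)
  show "0 \<in> disj_compl E (P ` E)" by (rule disj_compl_closed(2))
qed (rule add_0_right[symmetric])

lemma idem [simp]: "x \<in> E \<Longrightarrow> P (P x) = P x"
  by (rule fixes_range) (rule imageI)

lemma compl_vanishes: "x \<in> E \<Longrightarrow> P (x - P x) = 0"
  using diff[of x "P x"] closed by simp

lemma vdisj_compl: "x \<in> E \<Longrightarrow> y \<in> E \<Longrightarrow> vdisj (P x) (y - P y)"
  using compl_disj disj_compl_closed(7) vdisj_sym by blast

lemma nonneg: "x \<in> E \<Longrightarrow> 0 \<le> x \<Longrightarrow> 0 \<le> P x"
  using nonneg_if_vdisj_diff vdisj_compl by blast

lemma le_self: "x \<in> E \<Longrightarrow> 0 \<le> x \<Longrightarrow> P x \<le> x"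
  using nonneg_if_vdisj_diff[of x "x - P x"] vdisj_compl[of x x] by (simp add: vdisj_sym)

lemma mono: "x \<in> E \<Longrightarrow> y \<in> E \<Longrightarrow> x \<le> y \<Longrightarrow> P x \<le> P y"
  using nonneg[of "y - x"] diff E_diff by fastforce

lemma compl_mono: "x \<in> E \<Longrightarrow> y \<in> E \<Longrightarrow> x \<le> y \<Longrightarrow> x - P x \<le> y - P y"
  using le_self[of "y - x"] diff E_diff by (fastforce simp: algebra_simps)

lemma fixes_dominated: "y \<in> E \<Longrightarrow> z \<in> E \<Longrightarrow> vabs y \<le> vabs (P z) \<Longrightarrow> P y = y"
  using band_in_closed(6)[OF band_range] fixes_range by blast

lemma vanishes_dominated: "y \<in> E \<Longrightarrow> z \<in> E \<Longrightarrow> vabs y \<le> vabs (z - P z) \<Longrightarrow> P y = 0"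
  using disj_compl_closed(6)[OF _ compl_disj] band_range
  by (intro eqI[where c = y]) (auto simp: band_in_closed(2))

lemma unit_component: "P e \<in> E" "0 \<le> P e" "P e \<le> e"
  using nonneg le_self closed by auto

lemma vabs_add_le:
  assumes "z1 \<in> E" "z2 \<in> E" "w \<in> E" "P z1 = z1" "P z2 = 0" "vabs z1 \<le> w" "vabs z2 \<le> w"
  shows "vabs (z1 + z2) \<le> w"
proof -
  have "P z1 + (z2 - P z2) \<le> P w + (w - P w)" "P (- z1) + (- z2 - P (- z2)) \<le> P w + (w - P w)"
    using assms E_uminus by (intro add_mono mono compl_mono; auto simp: vabs_le_iff)+
  then show ?thesis using assms minus by (simp add: vabs_le_iff)
qed

lemma Sup_commute:
  assumes D: "D \<subseteq> E" "D \<noteq> {}" "up_directed D" and b: "b \<in> E" "\<And>d. d \<in> D \<Longrightarrow> d \<le> b"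
  shows "P (Sup D) = Sup (P ` D)"
proof -
  have S: "Sup D \<in> E" using E_Sup(1)[OF D(1,2) b] .
  have bdd: "bdd_above D" using b by (meson bdd_aboveI)
  define t where "t = Sup (P ` D)"
  define t' where "t' = Sup ((\<lambda>d. d - P d) ` D)"
  have bddP: "bdd_above (P ` D)" using D(1) b mono by (intro bdd_aboveI[of _ "P b"]) auto
  have bddC: "bdd_above ((\<lambda>d. d - P d) ` D)"
    using D(1) b compl_mono by (intro bdd_aboveI[of _ "b - P b"]) auto
  have le1: "t \<le> P (Sup D)" unfolding t_def
    using D S mono cSup_upper[OF _ bdd] by (intro cSup_least) auto
  have le2: "t' \<le> Sup D - P (Sup D)" unfolding t'_def
    using D S compl_mono cSup_upper[OF _ bdd] by (intro cSup_least) auto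
  have le3: "Sup D \<le> t + t'"
  proof (rule cSup_least[OF D(2)])
    fix d assume "d \<in> D"
    then have "P d + (d - P d) \<le> t + t'"
      unfolding t_def t'_def using bddP bddC by (intro add_mono cSup_upper) auto
    then show "d \<le> t + t'" by simp
  qed
  have "t + t' \<le> Sup D" using add_mono[OF le1 le2] by simp
  then have "(P (Sup D) - t) + ((Sup D - P (Sup D)) - t') = 0"
    using le3 by (simp add: algebra_simps)
  moreover have "0 \<le> P (Sup D) - t" "0 \<le> (Sup D - P (Sup D)) - t'" using le1 le2 by simp_all
  ultimately have "P (Sup D) - t = 0" using add_nonneg_eq_0_iff by blast
  then show ?thesis unfolding t_def by simp
qed

end

section \<open>Conditional expectations\<close>

locale cond_expectation = dc_riesz_subspace +
  fixes W
  assumes cond_exp: "cond_exp E W"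
    and unit_fixed: "W e = e"
begin

lemma closed: "x \<in> E \<Longrightarrow> W x \<in> E"
  using cond_exp by (auto simp: cond_exp_def)

lemma add: "x \<in> E \<Longrightarrow> y \<in> E \<Longrightarrow> W (x + y) = W x + W y"
  using cond_exp by (simp add: cond_exp_def linear_on_def)

lemma scaleR: "x \<in> E \<Longrightarrow> W (c *\<^sub>R x) = c *\<^sub>R W x"
  using cond_exp by (simp add: cond_exp_def linear_on_def)

lemma zero [simp]: "W 0 = 0"
  using scaleR[of 0 0] by simp

lemma minus: "x \<in> E \<Longrightarrow> W (- x) = - W x"
  using scaleR[of x "-1"] by simp

lemma diff: "x \<in> E \<Longrightarrow> y \<in> E \<Longrightarrow> W (x - y) = W x - W y"
  using add[of x "- y"] minus[of y] by (simp add: E_uminus)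

lemma nonneg: "x \<in> E \<Longrightarrow> 0 \<le> x \<Longrightarrow> 0 \<le> W x"
  using cond_exp by (simp add: cond_exp_def positive_on_def)

lemma mono: "x \<in> E \<Longrightarrow> y \<in> E \<Longrightarrow> x \<le> y \<Longrightarrow> W x \<le> W y"
  using nonneg[of "y - x"] diff by (simp add: E_diff)

lemma fixes_range: "y \<in> W ` E \<Longrightarrow> W y = y"
  using cond_exp by (auto simp: cond_exp_def)

lemma range_subset: "y \<in> W ` E \<Longrightarrow> y \<in> E"
  using cond_exp by (auto simp: cond_exp_def)

lemma range_riesz: "riesz_subspace (W ` E)"
  using cond_exp by (simp add: cond_exp_def)

lemma range_add: "x \<in> W ` E \<Longrightarrow> y \<in> W ` E \<Longrightarrow> x + y \<in> W ` E"
  and range_scaleR: "x \<in> W ` E \<Longrightarrow> c *\<^sub>R x \<in> W ` E"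
  and range_sup: "x \<in> W ` E \<Longrightarrow> y \<in> W ` E \<Longrightarrow> sup x y \<in> W ` E"
  and range_zero: "0 \<in> W ` E"
  using range_riesz unfolding riesz_subspace_def by blast+

lemma range_uminus: "x \<in> W ` E \<Longrightarrow> - x \<in> W ` E"
  using range_scaleR[of x "-1"] by simp

lemma range_diff: "x \<in> W ` E \<Longrightarrow> y \<in> W ` E \<Longrightarrow> x - y \<in> W ` E"
  using range_add[of x "- y"] range_uminus[of y] by simp

lemma range_inf: "x \<in> W ` E \<Longrightarrow> y \<in> W ` E \<Longrightarrow> inf x y \<in> W ` E"
  using range_sup[of "- x" "- y"] range_uminus by (metis inf_eq_neg_sup)

lemma range_pprt: "x \<in> W ` E \<Longrightarrow> pprt x \<in> W ` E"
  unfolding pprt_def by (intro range_sup range_zero)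

lemma range_nprt: "x \<in> W ` E \<Longrightarrow> nprt x \<in> W ` E"
  unfolding nprt_def by (intro range_inf range_zero)

lemma range_vabs: "x \<in> W ` E \<Longrightarrow> vabs x \<in> W ` E"
  unfolding vabs_def by (intro range_sup range_uminus)

lemma unit_in_range: "e \<in> W ` E"
  using imageI[OF e_in_E, of W] unit_fixed by simp

lemma vabs_le_scaleR_unit:
  assumes "x \<in> E" "vabs x \<le> c *\<^sub>R e"
  shows "vabs (W x) \<le> c *\<^sub>R e"
proof -
  have "W x \<le> W (c *\<^sub>R e)" "W (- x) \<le> W (c *\<^sub>R e)"
    using assms E_uminus[OF assms(1)] E_scaleR[OF e_in_E] by (auto simp: vabs_le_iff intro!: mono)
  then show ?thesis using assms(1) by (simp add: vabs_le_iff scaleR minus unit_fixed)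
qed

lemma Sup_commute:
  assumes D: "D \<subseteq> E" "D \<noteq> {}" "up_directed D" and b: "b \<in> E" "\<And>d. d \<in> D \<Longrightarrow> d \<le> b"
  shows "W (Sup D) = Sup (W ` D)"
proof -
  define s where "s = Sup D"
  have sE: "s \<in> E" using E_Sup(1)[OF D(1,2) b] unfolding s_def .
  have bddD: "bdd_above D" using b unfolding bdd_above_def by blast
  have below_s: "\<And>d. d \<in> D \<Longrightarrow> d \<le> s" unfolding s_def using bddD by (simp add: cSup_upper)
  define D' where "D' = (\<lambda>d. s - d) ` D"
  have "down_directed D'" unfolding D'_def down_directed_def
  proof (intro ballI)
    fix u v assume "u \<in> (\<lambda>d. s - d) ` D" "v \<in> (\<lambda>d. s - d) ` D"
    then obtain a b where ab: "a \<in> D" "b \<in> D" "u = s - a" "v = s - b" by auto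
    then obtain c where "c \<in> D" "a \<le> c" "b \<le> c" using D(3) unfolding up_directed_def by blast
    then show "\<exists>z\<in>(\<lambda>d. s - d) ` D. z \<le> u \<and> z \<le> v" using ab by (intro bexI[of _ "s - c"]) auto
  qed
  moreover have "is_glb_in E D' 0" unfolding is_glb_in_def
  proof (intro conjI ballI impI)
    show "\<And>x. x \<in> D' \<Longrightarrow> 0 \<le> x" unfolding D'_def using below_s by auto
    fix l assume "l \<in> E" "\<forall>x\<in>D'. l \<le> x"
    then have "\<And>d. d \<in> D \<Longrightarrow> d \<le> s - l" unfolding D'_def by (auto simp: algebra_simps)
    then have "s \<le> s - l" unfolding s_def using D(2) by (intro cSup_least) auto
    then show "l \<le> 0" by simp
  qed simp
  moreover have "D' \<subseteq> E" "D' \<noteq> {}" unfolding D'_def using D sE E_diff by auto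
  ultimately have glb: "is_glb_in E (W ` D') 0"
    using cond_exp unfolding cond_exp_def order_continuous_on_def by blast
  have WD: "W ` D \<subseteq> E" "W ` D \<noteq> {}" using D closed by auto
  have W_below: "\<And>d. d \<in> D \<Longrightarrow> W d \<le> W s" using D(1) below_s sE mono by blast
  have bdd: "bdd_above (W ` D)" using W_below unfolding bdd_above_def by blast
  have le: "Sup (W ` D) \<le> W s" using D(2) W_below by (intro cSup_least) auto
  have "W s - Sup (W ` D) \<in> E" using E_Sup(1)[OF WD closed[OF sE]] W_below closed[OF sE] E_diff by blast
  moreover have "\<forall>x\<in>W ` D'. W s - Sup (W ` D) \<le> x"
  proof
    fix x assume "x \<in> W ` D'"
    then obtain d where d: "d \<in> D" "x = W s - W d" unfolding D'_def using D(1) sE diff by auto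
    then show "W s - Sup (W ` D) \<le> x" using cSup_upper[OF _ bdd] by simp
  qed
  ultimately have "W s - Sup (W ` D) \<le> 0" using glb unfolding is_glb_in_def by blast
  with le show ?thesis unfolding s_def by simp
qed

lemma range_Sup:
  assumes D: "D \<subseteq> W ` E" "D \<noteq> {}" "up_directed D" and b: "b \<in> E" "\<And>d. d \<in> D \<Longrightarrow> d \<le> b"
  shows "Sup D \<in> W ` E"
proof -
  have DE: "D \<subseteq> E" using D(1) range_subset by blast
  have "\<And>d. d \<in> D \<Longrightarrow> W d = d" using D(1) fixes_range by blast
  then have "W ` D = D" by (simp add: image_cong[of D D W id])
  then have "W (Sup D) = Sup D" using Sup_commute[OF DE D(2,3) b] by (simp only:)
  moreover have "W (Sup D) \<in> W ` E" using E_Sup(1)[OF DE D(2) b] by (rule imageI)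
  ultimately show ?thesis by (simp only:)
qed

lemma range_Inf:
  assumes D: "D \<subseteq> W ` E" "D \<noteq> {}" "down_directed D" and b: "b \<in> E" "\<And>d. d \<in> D \<Longrightarrow> b \<le> d"
  shows "Inf D \<in> W ` E"
proof -
  have "uminus ` D \<subseteq> W ` E" using D(1) range_uminus by blast
  moreover have "up_directed (uminus ` D)" unfolding up_directed_def
  proof (intro ballI)
    fix u v assume "u \<in> uminus ` D" "v \<in> uminus ` D"
    then obtain a b where ab: "a \<in> D" "b \<in> D" "u = - a" "v = - b" by auto
    then obtain c where "c \<in> D" "c \<le> a" "c \<le> b" using D(3) unfolding down_directed_def by blast
    then show "\<exists>z\<in>uminus ` D. u \<le> z \<and> v \<le> z" using ab by (intro bexI[of _ "- c"]) auto
  qed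
  ultimately have "Sup (uminus ` D) \<in> W ` E"
    using D(2) b E_uminus[OF b(1)] by (intro range_Sup[of _ "- b"]) auto
  moreover have "Inf D = - Sup (uminus ` D)"
  proof -
    have bdd1: "bdd_below D" using b unfolding bdd_below_def by blast
    have "x \<le> - b" if "x \<in> uminus ` D" for x using that b(2) by auto
    then have bdd2: "bdd_above (uminus ` D)" by (rule bdd_aboveI)
    note bdd = bdd1 bdd2
    have "- Sup (uminus ` D) \<le> d" if "d \<in> D" for d
      using cSup_upper[OF _ bdd(2), of "- d"] that by (simp add: minus_le_iff)
    moreover have "Sup (uminus ` D) \<le> - Inf D"
      using D(2) cInf_lower[OF _ bdd(1)] by (intro cSup_least) (auto simp: minus_le_iff)
    ultimately show ?thesis
      using D(2) by (intro antisym cInf_greatest) (auto simp: le_minus_iff)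
  qed
  ultimately show ?thesis using range_uminus by simp
qed

end

context cond_expectation
begin

lemma commute_band_proj_bounded:
  assumes P: "band_projection E P" "P e \<in> W ` E"
    and x: "x \<in> E" "0 \<le> x" "x \<le> c *\<^sub>R e" and c: "0 \<le> c"
  shows "W (P x) = P (W x)"
proof -
  interpret P: band_proj E e P by unfold_locales (rule P(1))
  have ce: "c *\<^sub>R e \<in> E" by (simp add: E_scaleR)
  have Pce: "P (c *\<^sub>R e) = c *\<^sub>R P e" by (simp add: P.scaleR)
  have WPce: "W (P (c *\<^sub>R e)) = P (c *\<^sub>R e)"
    using fixes_range[OF P(2)] P.unit_component(1) by (simp add: Pce scaleR)
  have Wce: "W (c *\<^sub>R e) = c *\<^sub>R e" by (simp add: scaleR unit_fixed)
  have PxE: "P x \<in> E" using x(1) by (rule P.closed)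
  have QxE: "x - P x \<in> E" using x(1) PxE by (rule E_diff)
  define y1 where "y1 = W (P x)"
  define y2 where "y2 = W (x - P x)"
  have ce0: "0 \<le> c *\<^sub>R e" using c by (simp add: scaleR_nonneg_nonneg)
  have Pce0: "0 \<le> P (c *\<^sub>R e)" using P.nonneg[OF ce ce0] .
  \<comment> \<open>\<open>W\<close> fixes \<open>P (c e)\<close> and \<open>c e - P (c e)\<close>, so it maps the parts of \<open>x\<close> below them into their bands.\<close>
  have "0 \<le> y1" unfolding y1_def using PxE P.nonneg[OF x(1,2)] by (rule nonneg)
  moreover have "y1 \<le> W (P (c *\<^sub>R e))"
    unfolding y1_def using PxE P.closed[OF ce] P.mono[OF x(1) ce x(3)] by (rule mono)
  ultimately have y1: "0 \<le> y1" "y1 \<le> P (c *\<^sub>R e)" unfolding WPce by simp_all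
  have "P y1 = y1"
    using closed[OF PxE] ce y1 Pce0 unfolding y1_def[symmetric]
    by (intro P.fixes_dominated[of y1 "c *\<^sub>R e"]) simp_all
  have y2: "0 \<le> y2" "y2 \<le> c *\<^sub>R e - P (c *\<^sub>R e)"
  proof -
    show "0 \<le> y2" unfolding y2_def using QxE P.le_self[OF x(1,2)] by (intro nonneg) simp_all
    have "y2 \<le> W (c *\<^sub>R e - P (c *\<^sub>R e))"
      unfolding y2_def using QxE E_diff[OF ce P.closed[OF ce]] P.compl_mono[OF x(1) ce x(3)]
        by (rule mono)
    also have "\<dots> = c *\<^sub>R e - P (c *\<^sub>R e)" using ce P.closed[OF ce] by (simp add: diff Wce WPce)
    finally show "y2 \<le> c *\<^sub>R e - P (c *\<^sub>R e)" .
  qed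
  have "P y2 = 0"
    using closed[OF QxE] ce y2 order_trans[OF y2] unfolding y2_def[symmetric]
    by (intro P.vanishes_dominated[of y2 "c *\<^sub>R e"]) simp_all
  have "W x = y1 + y2" unfolding y1_def y2_def using add[OF PxE QxE] by simp
  then show ?thesis
    using \<open>P y1 = y1\<close> \<open>P y2 = 0\<close> P.add closed[OF PxE] closed[OF QxE] unfolding y1_def y2_def by simp
qed

lemma commute_band_proj_nonneg:
  assumes P: "band_projection E P" "P e \<in> W ` E" and x: "x \<in> E" "0 \<le> x"
  shows "W (P x) = P (W x)"
proof -
  interpret P: band_proj E e P by unfold_locales (rule P(1))
  define D where "D = range (\<lambda>n::nat. inf x (real n *\<^sub>R e))"
  note D = multiples_chain[OF x e_in_E e_nonneg, folded D_def]
  have DE: "\<And>d. d \<in> D \<Longrightarrow> d \<in> E" using D(1) by blast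
  have xD: "x = Sup D" using band_component_unit[OF x] unfolding band_component_def D_def by simp
  have "W ` P ` D = P ` W ` D"
  proof -
    have "W (P d) = P (W d)" if d: "d \<in> D" for d
    proof -
      obtain n where "d = inf x (real n *\<^sub>R e)" using d unfolding D_def by blast
      then show ?thesis
        using D(1,4) d x
        by (intro commute_band_proj_bounded[OF P, of _ "real n"]) (auto simp: scaleR_nonneg_nonneg)
    qed
    then show ?thesis by (simp add: image_image cong: image_cong)
  qed
  moreover have "W (Sup (P ` D)) = Sup (W ` P ` D)"
  proof (rule Sup_commute)
    show "P ` D \<subseteq> E" "up_directed (P ` D)" "\<And>d. d \<in> P ` D \<Longrightarrow> d \<le> P x"
      using DE x D(3,4) by (auto intro!: up_directed_image P.closed P.mono)
  qed (use D(2) P.closed[OF x(1)] in auto)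
  moreover have "P (Sup (W ` D)) = Sup (P ` W ` D)"
  proof (rule P.Sup_commute)
    show "W ` D \<subseteq> E" "up_directed (W ` D)" "\<And>d. d \<in> W ` D \<Longrightarrow> d \<le> W x"
      using DE x D(3,4) by (auto intro!: up_directed_image closed mono)
  qed (use D(2) closed[OF x(1)] in auto)
  ultimately show ?thesis
    using xD P.Sup_commute[OF D(1-3) x(1)] Sup_commute[OF D(1-3) x(1)] D(4) by simp
qed

lemma commute_band_proj:
  assumes P: "band_projection E P" "P e \<in> W ` E" and x: "x \<in> E"
  shows "W (P x) = P (W x)"
proof -
  interpret P: band_proj E e P by unfold_locales (rule P(1))
  have parts: "pprt x \<in> E" "0 \<le> pprt x" "- nprt x \<in> E" "0 \<le> - nprt x" "x = pprt x - (- nprt x)"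
    using x by (auto intro: E_pprt E_nprt E_uminus simp: prts[symmetric])
  then show ?thesis
    using commute_band_proj_nonneg[OF P] P.diff diff P.closed closed by metis
qed

end

context dc_riesz_subspace
begin

lemma pprt_vdisj_is_lub_in:
  assumes a: "a \<in> E" "0 \<le> a" and S: "\<And>x. x \<in> S \<Longrightarrow> vdisj x a" and s: "is_lub_in E S s"
  shows "vdisj (pprt s) a"
proof -
  have sE: "s \<in> E" and ub: "\<And>x. x \<in> S \<Longrightarrow> x \<le> s"
    and least: "\<And>b. b \<in> E \<Longrightarrow> \<forall>x\<in>S. x \<le> b \<Longrightarrow> s \<le> b"
    using s unfolding is_lub_in_def by auto
  define c where "c = inf (pprt s) a"
  have c0: "0 \<le> c" and cs: "c \<le> pprt s" unfolding c_def using a by simp_all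
  have "x \<le> inf s (pprt s - c)" if x: "x \<in> S" for x
  proof -
    have "vabs (pprt x) \<le> vabs x" using pprt_le_vabs[of x] by simp
    then have "vdisj (pprt x) a" using S[OF x] by (rule vdisj_mono)
    then have "inf (pprt x) c \<le> 0"
      unfolding c_def vdisj_def using a inf_mono[OF order_refl inf.cobounded2, of "pprt x" "pprt s" a]
      by simp
    then have "inf (pprt x) c = 0" using c0 by (simp add: order.antisym)
    then have "pprt x + c = sup (pprt x) c" by (rule add_eq_sup_if_inf_eq_0)
    also have "\<dots> \<le> pprt s" using pprt_mono[OF ub[OF x]] cs by simp
    finally have "pprt x \<le> pprt s - c" by (simp add: algebra_simps)
    then have "x \<le> pprt s - c" using order_trans[of x "pprt x"] by (simp add: pprt_def)
    then show ?thesis using ub[OF x] by simp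
  qed
  then have "s \<le> inf s (pprt s - c)"
    using sE a(1) unfolding c_def by (intro least E_inf E_diff E_pprt) auto
  then have "pprt s \<le> pprt s - c" using cs unfolding pprt_def by simp
  then have "c \<le> 0" by simp
  then have "c = 0" using c0 by (rule antisym)
  then show ?thesis using a unfolding c_def vdisj_def by simp
qed

lemma vdisj_is_lub_in:
  assumes a: "a \<in> E" "0 \<le> a" and S: "\<And>x. x \<in> S \<Longrightarrow> vdisj x a" and s: "is_lub_in E S s"
  shows "vdisj s a"
proof (cases "S = {}")
  case True
  then have sE: "s \<in> E" and least: "\<And>b. b \<in> E \<Longrightarrow> s \<le> b"
    using s unfolding is_lub_in_def by simp_all
  have "s \<le> 0" using least[OF E_zero] .
  moreover have "0 \<le> s" using least[OF E_add[OF sE sE]] by simp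
  ultimately have "s = 0" by (rule antisym)
  then show ?thesis by simp
next
  case False
  then obtain x0 where x0: "x0 \<in> S" by blast
  have "x0 \<le> s" using s x0 unfolding is_lub_in_def by blast
  have "vabs (nprt s) = - nprt s" using vabs_of_nonneg[of "- nprt s"] by simp
  moreover have "- nprt s \<le> - nprt x0" using nprt_mono[OF \<open>x0 \<le> s\<close>] by simp
  ultimately have "vabs (nprt s) \<le> vabs x0" using minus_nprt_le_vabs[of x0] by (metis order_trans)
  then have "vdisj (nprt s) a" using S[OF x0] by (rule vdisj_mono)
  then have "vdisj (pprt s + nprt s) a" using pprt_vdisj_is_lub_in[OF a S s] vdisj_add by blast
  then show ?thesis by (simp add: prts[symmetric])
qed

lemma disjoint_band:
  assumes a: "a \<in> E" "0 \<le> a"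
  defines "B \<equiv> {y\<in>E. vdisj y a}"
  shows "band_in E B"
  unfolding band_in_def riesz_subspace_def
proof (intro conjI allI ballI impI)
  show "B \<subseteq> E" "0 \<in> B" unfolding B_def by auto
  show "x + y \<in> B" if "x \<in> B" "y \<in> B" for x y
    using that vdisj_add E_add unfolding B_def by blast
  show "c *\<^sub>R x \<in> B" if "x \<in> B" for x c
    using that vdisj_scaleR E_scaleR unfolding B_def by blast
  show "x \<in> B" if "x \<in> E" "y \<in> B" "vabs x \<le> vabs y" for x y
    using that vdisj_mono unfolding B_def by blast
  show "s \<in> B" if "S \<subseteq> B \<and> is_lub_in E S s" for S s
    using that vdisj_is_lub_in[OF a, of S s] unfolding B_def is_lub_in_def by blast
  show "sup x y \<in> B" if xy: "x \<in> B" "y \<in> B" for x y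
  proof -
    have "sup x y \<le> vabs x + vabs y"
      using add_mono[OF vabs_ge(1)[of x] vabs_nonneg[of y]]
        add_mono[OF vabs_nonneg[of x] vabs_ge(1)[of y]]
      by simp
    moreover have "- sup x y \<le> vabs x + vabs y"
      using order_trans[OF _ vabs_ge(2)[of x], of "- sup x y"] add_increasing2[OF vabs_nonneg[of y]]
      by simp
    ultimately have "vabs (sup x y) \<le> vabs (vabs x + vabs y)" by (simp add: vabs_le_iff)
    moreover have "vdisj (vabs x + vabs y) a"
      using xy unfolding B_def by (auto intro: vdisj_add)
    ultimately have "vdisj (sup x y) a" by (rule vdisj_mono)
    then show ?thesis using xy E_sup unfolding B_def by blast
  qed
qed

lemma band_component_disjoint:
  assumes "0 \<le> x" "0 \<le> a" "inf x a = 0"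
  shows "band_component a x = 0"
proof -
  have "range (\<lambda>n::nat. inf x (real n *\<^sub>R a)) = {0}"
    using inf_scaleR_of_nat_eq_0[OF assms] by auto
  then show ?thesis unfolding band_component_def by simp
qed

lemma band_component_self:
  assumes "a \<in> E" "0 \<le> a"
  shows "band_component a a = a"
proof -
  note c = band_component[OF assms assms]
  then have "inf (a - band_component a a) a = a - band_component a a" by (simp add: inf_absorb1)
  then show ?thesis using c(4) by simp
qed

definition disjoint_projection :: "'a \<Rightarrow> 'a \<Rightarrow> 'a" where
  "disjoint_projection a x = x - (band_component a (pprt x) - band_component a (- nprt x))"

lemma disjoint_projection:
  assumes a: "a \<in> E" "0 \<le> a"
  shows "band_projection E (disjoint_projection a)"
    and "x \<in> E \<Longrightarrow> vdisj (disjoint_projection a x) a"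
proof -
  define B where "B = {y\<in>E. vdisj y a}"
  have component_compl: "band_component a x \<in> disj_compl E B" if "x \<in> E" "0 \<le> x" for x
    using band_component[OF that a] band_component_vdisj[OF that a] unfolding disj_compl_def B_def
      by blast
  have rest_band: "x - band_component a x \<in> B" if x: "x \<in> E" "0 \<le> x" for x
    using band_component[OF x a] a x E_diff unfolding B_def by (simp add: vdisj_of_nonneg)
  have "disjoint_projection a x \<in> B" "x - disjoint_projection a x \<in> disj_compl E B" if x: "x \<in> E" for x
  proof -
    have "disjoint_projection a x =
        (pprt x - band_component a (pprt x)) - (- nprt x - band_component a (- nprt x))"
      unfolding disjoint_projection_def using prts[of x] by (simp add: algebra_simps)
    then show "disjoint_projection a x \<in> B"
      using x rest_band E_pprt E_nprt E_uminus band_in_closed(5)[OF disjoint_band[OF a, folded B_def]]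
      by (simp add: vabs_of_nonneg)
    show "x - disjoint_projection a x \<in> disj_compl E B"
      using x component_compl E_pprt E_nprt E_uminus disj_compl_closed(5)
      by (simp add: disjoint_projection_def)
  qed
  then show "band_projection E (disjoint_projection a)" "x \<in> E \<Longrightarrow> vdisj (disjoint_projection a x) a"
    using disjoint_band[OF a] unfolding band_projection_def B_def by blast+
qed

end

context cond_expectation
begin

text \<open>The projection onto the disjoint complement of \<open>h\<^sup>-\<close>; its unit component lies in the range of
  \<open>W\<close> since it is built from \<open>e\<close> and \<open>h\<close> by lattice operations and a bounded increasing supremum.\<close>

lemma sign_projection:
  assumes h: "h \<in> W ` E"
  obtains P where "band_projection E P" "P e \<in> W ` E" "P h = pprt h"
    "\<And>x. x \<in> E \<Longrightarrow> vdisj (P x) (nprt h)"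
proof
  define a where "a = - nprt h"
  have hE: "h \<in> E" using h by (rule range_subset)
  have a: "a \<in> E" "0 \<le> a" unfolding a_def using E_uminus[OF E_nprt[OF hE]] by simp_all
  show "band_projection E (disjoint_projection a)"
    "\<And>x. x \<in> E \<Longrightarrow> vdisj (disjoint_projection a x) (nprt h)"
    using disjoint_projection[OF a] unfolding a_def vdisj_def by simp_all
  have "band_component a (pprt h) = 0"
    unfolding a_def by (rule band_component_disjoint) (simp_all add: inf_pprt_minus_nprt)
  then show "disjoint_projection a h = pprt h"
    using band_component_self[OF a] prts[of h] unfolding disjoint_projection_def a_def
    by (simp add: algebra_simps)
  have aW: "a \<in> W ` E" unfolding a_def using h by (intro range_uminus range_nprt)
  note D = multiples_chain[OF e_in_E e_nonneg a]
  have "band_component a e \<in> W ` E"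
    unfolding band_component_def
    using D(2-4) by (intro range_Sup[of _ e]) (auto intro!: range_inf range_scaleR unit_in_range aW)
  moreover have "band_component a 0 = 0" using a(2)
    by (intro band_component_disjoint) (simp_all add: inf_absorb1)
  ultimately show "disjoint_projection a e \<in> W ` E"
    unfolding disjoint_projection_def by (simp add: range_diff unit_in_range)
qed

lemma layer_decomposition:
  assumes eps: "0 < \<epsilon>" and k: "k \<in> W ` E" "0 \<le> k"
  obtains P r where "band_projection E P" "P e \<in> W ` E" "k = pprt (k - \<epsilon> *\<^sub>R e) + \<epsilon> *\<^sub>R P e + r"
    "P (pprt (k - \<epsilon> *\<^sub>R e)) = pprt (k - \<epsilon> *\<^sub>R e)" "r \<in> E" "P r = 0" "0 \<le> r" "r \<le> \<epsilon> *\<^sub>R e"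
proof -
  have kE: "k \<in> E" using k(1) by (rule range_subset)
  have hE: "k - \<epsilon> *\<^sub>R e \<in> E" using kE by (intro E_diff E_scaleR e_in_E)
  have hW: "k - \<epsilon> *\<^sub>R e \<in> W ` E" using k(1) by (intro range_diff range_scaleR unit_in_range)
  obtain P where P: "band_projection E P" "P e \<in> W ` E" "P (k - \<epsilon> *\<^sub>R e) = pprt (k - \<epsilon> *\<^sub>R e)"
    using sign_projection[OF hW] by metis
  interpret P: band_proj E e P by unfold_locales (rule P(1))
  define r where "r = k - P k"
  have Pk: "P k = pprt (k - \<epsilon> *\<^sub>R e) + \<epsilon> *\<^sub>R P e"
    using P.add[OF hE E_scaleR[OF e_in_E, of \<epsilon>]] P(3) by (simp add: P.scaleR)
  show ?thesis
  proof (rule that[OF P(1,2), of r])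
    show "k = pprt (k - \<epsilon> *\<^sub>R e) + \<epsilon> *\<^sub>R P e + r" unfolding r_def Pk[symmetric] by simp
    show "P (pprt (k - \<epsilon> *\<^sub>R e)) = pprt (k - \<epsilon> *\<^sub>R e)"
      using P.idem[OF hE] P(3) by simp
    show "r \<in> E" "P r = 0" unfolding r_def using E_diff[OF kE P.closed[OF kE]] P.compl_vanishes[OF kE]
      by simp_all
    show "0 \<le> r" unfolding r_def using P.le_self[OF kE k(2)] by simp
    have "r = nprt (k - \<epsilon> *\<^sub>R e) + \<epsilon> *\<^sub>R (e - P e)"
      unfolding r_def Pk using prts[of "k - \<epsilon> *\<^sub>R e"] by (simp add: algebra_simps scaleR_diff_right)
    also have "\<dots> \<le> \<epsilon> *\<^sub>R e"
      using eps P.unit_component(2) nprt_le_zero[of "k - \<epsilon> *\<^sub>R e"]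
      by (simp add: scaleR_diff_right algebra_simps scaleR_nonneg_nonneg order_trans[OF nprt_le_zero])
    finally show "r \<le> \<epsilon> *\<^sub>R e" .
  qed
qed

lemma truncation_projection:
  assumes k: "k \<in> W ` E"
  obtains P where "band_projection E P" "P e \<in> W ` E" "vabs (k - P k) \<le> real N *\<^sub>R e"
    "\<And>y. y \<in> E \<Longrightarrow> vdisj (P y) (pprt (real N *\<^sub>R e - vabs k))"
proof -
  define h where "h = vabs k - real N *\<^sub>R e"
  have kE: "k \<in> E" using k by (rule range_subset)
  have hW: "h \<in> W ` E" unfolding h_def using k
    by (intro range_diff range_vabs range_scaleR unit_in_range)
  obtain P where P: "band_projection E P" "P e \<in> W ` E" "P h = pprt h"
    and disj: "\<And>y. y \<in> E \<Longrightarrow> vdisj (P y) (nprt h)"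
    using sign_projection[OF hW] by metis
  interpret P: band_proj E e P by unfold_locales (rule P(1))
  have "k - P k \<le> vabs k - P (vabs k)" "- k - P (- k) \<le> vabs k - P (vabs k)"
    using kE E_vabs[OF kE] E_uminus[OF kE] vabs_ge by (auto intro: P.compl_mono)
  moreover have "vabs k - P (vabs k) \<le> real N *\<^sub>R e"
  proof -
    have "vabs k - P (vabs k) = nprt h + real N *\<^sub>R (e - P e)"
      using P.add[of h "real N *\<^sub>R e"] P(3) prts[of h] hW range_subset P.scaleR[OF e_in_E]
      unfolding h_def by (simp add: E_scaleR algebra_simps scaleR_diff_right)
    also have "\<dots> \<le> real N *\<^sub>R e"
      using P.unit_component(2) nprt_le_zero[of h]
      by (simp add: scaleR_diff_right algebra_simps order_trans[OF nprt_le_zero] scaleR_nonneg_nonneg)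
    finally show ?thesis .
  qed
  ultimately have "vabs (k - P k) \<le> real N *\<^sub>R e"
    using P.minus[OF kE] unfolding vabs_le_iff by (auto intro: order_trans)
  moreover have "pprt (real N *\<^sub>R e - vabs k) = - nprt h"
    using pprt_neg[of h] unfolding h_def by simp
  ultimately show ?thesis
    using that[OF P(1,2)] disj by (simp add: vdisj_def)
qed

end

section \<open>The multiplication of the universal completion\<close>

locale f_algebra =
  fixes m :: "'a::{ordered_real_vector,lattice_ab_group_add} \<Rightarrow> 'a \<Rightarrow> 'a" and e :: 'a
  assumes f_algebra: "f_algebra_unit m e"
begin

lemma m_addL: "m (x + y) z = m x z + m y z"
  and m_addR: "m x (y + z) = m x y + m x z"
  and m_scaleL: "m (c *\<^sub>R x) y = c *\<^sub>R m x y"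
  and m_scaleR: "m x (c *\<^sub>R y) = c *\<^sub>R m x y"
  and m_assoc: "m (m x y) z = m x (m y z)"
  and m_nonneg: "0 \<le> x \<Longrightarrow> 0 \<le> y \<Longrightarrow> 0 \<le> m x y"
  and m_unitL [simp]: "m e x = x"
  and m_unitR [simp]: "m x e = x"
  using f_algebra by (simp_all add: f_algebra_unit_def)

lemma m_disjoint: "0 \<le> x \<Longrightarrow> 0 \<le> y \<Longrightarrow> 0 \<le> z \<Longrightarrow> inf x y = 0 \<Longrightarrow> inf (m x z) y = 0"
  using f_algebra unfolding f_algebra_unit_def by blast

lemma m_minusL: "m (- x) y = - m x y"
  using m_scaleL[of "-1" x y] by simp

lemma m_minusR: "m x (- y) = - m x y"
  using m_scaleR[of x "-1" y] by simp

lemma m_diffL: "m (x - y) z = m x z - m y z"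
  using m_addL[of x "- y" z] by (simp add: m_minusL)

lemma m_diffR: "m x (y - z) = m x y - m x z"
  using m_addR[of x y "- z"] by (simp add: m_minusR)

lemma m_monoL: "0 \<le> z \<Longrightarrow> x \<le> y \<Longrightarrow> m x z \<le> m y z"
  using m_nonneg[of "y - x" z] by (simp add: m_diffL)

lemma m_monoR: "0 \<le> z \<Longrightarrow> x \<le> y \<Longrightarrow> m z x \<le> m z y"
  using m_nonneg[of z "y - x"] by (simp add: m_diffR)

lemma m_le_m_vabs: "m a b \<le> m (vabs a) (vabs b)"
proof -
  define a1 a2 b1 b2 where "a1 = pprt a" "a2 = - nprt a" "b1 = pprt b" "b2 = - nprt b"
  have nn: "0 \<le> a1" "0 \<le> a2" "0 \<le> b1" "0 \<le> b2" unfolding a1_a2_b1_b2_def by auto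
  have a: "a = a1 - a2" and b: "b = b1 - b2" unfolding a1_a2_b1_b2_def using prts by auto
  have va: "vabs a = a1 + a2" and vb: "vabs b = b1 + b2"
    unfolding a1_a2_b1_b2_def by (auto simp: vabs_eq_pprt_minus_nprt)
  have "m a b = (m a1 b1 + m a2 b2) - (m a1 b2 + m a2 b1)"
    unfolding a b by (simp add: m_diffL m_diffR algebra_simps)
  also have "\<dots> \<le> (m a1 b1 + m a2 b2) + (m a1 b2 + m a2 b1)"
  proof -
    have "0 \<le> m a1 b2 + m a2 b1" using nn by (simp add: m_nonneg add_nonneg_nonneg)
    then show ?thesis by (meson diff_le_eq le_add_same_cancel1 order_trans)
  qed
  also have "\<dots> = m (vabs a) (vabs b)"
    unfolding va vb by (simp add: m_addL m_addR algebra_simps)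
  finally show ?thesis .
qed

end

lemma f_algebra_flip: "f_algebra m e \<Longrightarrow> f_algebra (\<lambda>x y. m y x) e"
  unfolding f_algebra_def f_algebra_unit_def by auto

context band_proj
begin

lemma eq_0_if_disjoint_unit_components:
  assumes "w \<in> E" "0 \<le> w" "inf w (P e) = 0" "inf w (e - P e) = 0"
  shows "w = 0"
proof -
  have "inf w e \<le> inf w (P e) + inf w (e - P e)"
    using inf_add_le_add_inf[OF assms(2) unit_component(2), of "e - P e"] unit_component(3) by simp
  then have "inf (vabs w) e = 0" using assms(2-4) by (simp add: order.antisym)
  then show ?thesis using eq_0_if_disjoint_unit[OF assms(1)] by simp
qed

lemma fixes_if_disjoint_compl:
  assumes z: "z \<in> E" "0 \<le> z" and disj: "inf z (e - P e) = 0"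
  shows "P z = z"
proof -
  have w: "z - P z \<in> E" "0 \<le> z - P z" "z - P z \<le> z" using z nonneg le_self closed E_diff by auto
  have "inf (z - P z) (P e) = 0"
    using vdisj_compl[OF e_in_E z(1)] w unit_component unfolding vdisj_def by (simp add: inf_commute)
  moreover have "inf (z - P z) (e - P e) = 0"
    using inf_mono[OF w(3) order_refl, of "e - P e"] disj w(2) unit_component
      by (simp add: order.antisym)
  ultimately show ?thesis using eq_0_if_disjoint_unit_components[OF w(1,2)] by simp
qed

lemma vanishes_if_disjoint_unit_component:
  assumes z: "z \<in> E" "0 \<le> z" and disj: "inf z (P e) = 0"
  shows "P z = 0"
proof -
  have v: "P z \<in> E" "0 \<le> P z" "P z \<le> z" using z nonneg le_self closed by auto
  have "inf (P z) (e - P e) = 0"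
    using vdisj_compl[OF z(1) e_in_E] v unit_component unfolding vdisj_def by simp
  moreover have "inf (P z) (P e) = 0"
    using inf_mono[OF v(3) order_refl, of "P e"] disj v(2) unit_component by (simp add: order.antisym)
  ultimately show ?thesis using eq_0_if_disjoint_unit_components[OF v(1,2)] by simp
qed

end

locale dc_f_algebra = dc_riesz_subspace + f_algebra
begin

lemma m_component_nonneg:
  assumes P: "band_projection E P" and x: "x \<in> E" "0 \<le> x"
  shows "m (P e) x = P x"
proof -
  interpret P: band_proj E e P by unfold_locales (rule P)
  define p q where "p = P e" and "q = e - P e"
  have pq: "0 \<le> p" "0 \<le> q" "inf p q = 0" "p + q = e"
    using P.unit_component P.vdisj_compl[OF e_in_E e_in_E] unfolding p_def q_def vdisj_def by simp_all
  have mx: "0 \<le> m p x" "0 \<le> m q x" "m p x + m q x = x"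
    using pq x m_nonneg m_addL[of p q x] by simp_all
  have mE: "m p x \<in> E" "m q x \<in> E"
    using mx x E_ideal[OF x(1)] E_diff[OF x(1)] by (auto simp: add_increasing2 eq_diff_eq[symmetric])
  have "P (m p x) = m p x"
    using mE mx m_disjoint[OF pq(1,2) x(2) pq(3)] unfolding q_def
      by (intro P.fixes_if_disjoint_compl) simp_all
  moreover have "P (m q x) = 0"
    using mE mx m_disjoint[OF pq(2,1) x(2)] pq(3) unfolding p_def
    by (intro P.vanishes_if_disjoint_unit_component) (simp_all add: inf_commute)
  ultimately show ?thesis using P.add[OF mE] mx(3) unfolding p_def by simp
qed

lemma m_component:
  assumes P: "band_projection E P" and x: "x \<in> E"
  shows "m (P e) x = P x" "m x (P e) = P x"
proof -
  interpret P: band_proj E e P by unfold_locales (rule P)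
  interpret flip: dc_f_algebra E e "\<lambda>x y. m y x"
    by (intro_locales; (rule f_algebra_flip)?) (simp add: f_algebra_axioms)
  have parts: "pprt x \<in> E" "0 \<le> pprt x" "- nprt x \<in> E" "0 \<le> - nprt x" "x = pprt x - (- nprt x)"
    using x E_pprt E_nprt E_uminus by (auto simp: prts[symmetric])
  show "m (P e) x = P x"
    using parts m_component_nonneg[OF P] P.diff m_diffR by metis
  show "m x (P e) = P x"
    using parts flip.m_component_nonneg[OF P] P.diff m_diffL by metis
qed

lemma m_in_E:
  assumes x: "x \<in> E" and k: "k \<in> E" "vabs k \<le> c *\<^sub>R e"
  shows "m x k \<in> E"
proof -
  have bounded: "m a b \<in> E" if ab: "a \<in> E" "0 \<le> a" "0 \<le> b" "b \<le> c *\<^sub>R e" for a b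
    using ab m_nonneg m_monoR[of a b "c *\<^sub>R e"] E_ideal[OF E_scaleR[OF ab(1)], of "m a b" c]
    by (simp add: m_scaleR)
  have "pprt k \<le> c *\<^sub>R e" "- nprt k \<le> c *\<^sub>R e"
    using order_trans[OF pprt_le_vabs k(2)] order_trans[OF minus_nprt_le_vabs k(2)] by auto
  then have "m (pprt x) (pprt k) \<in> E" "m (pprt x) (- nprt k) \<in> E"
    "m (- nprt x) (pprt k) \<in> E" "m (- nprt x) (- nprt k) \<in> E"
    using x E_pprt E_nprt E_uminus by (auto intro!: bounded)
  moreover have "m x k = m (pprt x + nprt x) (pprt k + nprt k)"
    by (simp only: prts[symmetric])
  then have "m x k = (m (pprt x) (pprt k) - m (pprt x) (- nprt k))
      - (m (- nprt x) (pprt k) - m (- nprt x) (- nprt k))"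
    by (simp add: m_addL m_addR m_minusL m_minusR algebra_simps)
  ultimately show ?thesis by (simp add: E_diff)
qed

lemma m_in_E_left:
  assumes "x \<in> E" "k \<in> E" "vabs k \<le> c *\<^sub>R e"
  shows "m k x \<in> E"
proof -
  interpret flip: dc_f_algebra E e "\<lambda>x y. m y x"
    by (intro_locales; (rule f_algebra_flip)?) (simp add: f_algebra_axioms)
  show ?thesis using flip.m_in_E[OF assms] .
qed

lemma band_proj_m:
  assumes P: "band_projection E P" and "y \<in> E" "k \<in> E" "m y k \<in> E"
  shows "P (m y k) = m y (P k)"
  using assms m_component[OF P] by (metis m_assoc)

end

section \<open>The averaging property\<close>

locale ce_f_algebra = cond_expectation + dc_f_algebra
begin

definition averaging_defect :: "'a \<Rightarrow> 'a \<Rightarrow> 'a" where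
  "averaging_defect x k = W (m x k) - m (W x) k"

lemma averaging_defect_in_E:
  "m x k \<in> E \<Longrightarrow> m (W x) k \<in> E \<Longrightarrow> averaging_defect x k \<in> E"
  unfolding averaging_defect_def by (intro E_diff closed)

lemma averaging_defect_zero [simp]: "averaging_defect x 0 = 0"
  by (simp add: averaging_defect_def m_scaleR[of _ 0 0, simplified])

lemma averaging_defect_add:
  assumes "m x k \<in> E" "m (W x) k \<in> E" "m x l \<in> E" "m (W x) l \<in> E"
  shows "averaging_defect x (k + l) = averaging_defect x k + averaging_defect x l"
  using assms unfolding averaging_defect_def by (simp add: m_addR add)

lemma averaging_defect_diff:
  assumes "m x k \<in> E" "m (W x) k \<in> E" "m x l \<in> E" "m (W x) l \<in> E"
  shows "averaging_defect x (k - l) = averaging_defect x k - averaging_defect x l"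
  using assms unfolding averaging_defect_def by (simp add: m_diffR diff)

lemma averaging_defect_scaleR:
  assumes "m x k \<in> E"
  shows "averaging_defect x (c *\<^sub>R k) = c *\<^sub>R averaging_defect x k"
  using assms unfolding averaging_defect_def by (simp add: m_scaleR scaleR scaleR_diff_right)

lemma averaging_defect_band_proj:
  assumes P: "band_projection E P" "P e \<in> W ` E"
    and x: "x \<in> E" and k: "k \<in> E" "m x k \<in> E" "m (W x) k \<in> E"
  shows "P (averaging_defect x k) = averaging_defect x (P k)"
proof -
  interpret P: band_proj E e P by unfold_locales (rule P(1))
  have "P (W (m x k)) = W (m x (P k))"
    using commute_band_proj[OF P k(2)] band_proj_m[OF P(1) x k(1,2)] by simp
  moreover have "P (m (W x) k) = m (W x) (P k)"
    using band_proj_m[OF P(1) closed[OF x] k(1,3)] .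
  ultimately show ?thesis
    unfolding averaging_defect_def using k closed[OF k(2)] by (simp add: P.diff)
qed

lemma averaging_defect_unit_component:
  assumes P: "band_projection E P" "P e \<in> W ` E" and x: "x \<in> E"
  shows "averaging_defect x (P e) = 0"
  unfolding averaging_defect_def
  using m_component(2)[OF P(1) x] m_component(2)[OF P(1) closed[OF x]] commute_band_proj[OF P x]
  by simp

lemma averaging_defect_step:
  assumes x: "x \<in> E" "0 \<le> x" and eps: "0 < \<epsilon>"
    and k: "k \<in> W ` E" "0 \<le> k" "k \<le> c *\<^sub>R e"
    and IH: "vabs (averaging_defect x (pprt (k - \<epsilon> *\<^sub>R e))) \<le> \<epsilon> *\<^sub>R W x"
  shows "vabs (averaging_defect x k) \<le> \<epsilon> *\<^sub>R W x"
proof -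
  obtain P r where P: "band_projection E P" "P e \<in> W ` E"
    and decomp: "k = pprt (k - \<epsilon> *\<^sub>R e) + \<epsilon> *\<^sub>R P e + r" "P (pprt (k - \<epsilon> *\<^sub>R e)) = pprt (k - \<epsilon> *\<^sub>R e)"
    and r: "r \<in> E" "P r = 0" "0 \<le> r" "r \<le> \<epsilon> *\<^sub>R e"
    using layer_decomposition[OF eps k(1,2)] by metis
  interpret P: band_proj E e P by unfold_locales (rule P(1))
  define k' where "k' = pprt (k - \<epsilon> *\<^sub>R e)"
  have k': "k' \<in> E" "vabs k' \<le> c *\<^sub>R e"
  proof -
    show "k' \<in> E" unfolding k'_def using range_subset[OF k(1)] by (intro E_pprt E_diff E_scaleR e_in_E)
    have "k' \<le> pprt k" unfolding k'_def using eps by (intro pprt_mono) (simp add: scaleR_nonneg_nonneg)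
    then show "vabs k' \<le> c *\<^sub>R e" using k(2,3) unfolding k'_def by simp
  qed
  have products: "m x k' \<in> E" "m (W x) k' \<in> E" "m x r \<in> E" "m (W x) r \<in> E"
    "m x (P e) \<in> E" "m (W x) (P e) \<in> E"
    using m_in_E[OF _ k'] m_in_E[OF _ r(1), of _ \<epsilon>] m_in_E[OF _ P.unit_component(1), of _ 1]
      x(1) closed[OF x(1)] r(3,4) P.unit_component
    by simp_all
  have "averaging_defect x k = averaging_defect x k' + averaging_defect x r"
    using products averaging_defect_unit_component[OF P x(1)] decomp(1)[folded k'_def]
    by (simp add: averaging_defect_add averaging_defect_scaleR m_addR m_scaleR E_add E_scaleR)
  moreover have "P (averaging_defect x k') = averaging_defect x k'"
    using averaging_defect_band_proj[OF P x(1) k'(1)] products decomp(2)[folded k'_def] by simp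
  moreover have "P (averaging_defect x r) = 0"
    using averaging_defect_band_proj[OF P x(1) r(1)] products r(2) by simp
  moreover have "vabs (averaging_defect x r) \<le> \<epsilon> *\<^sub>R W x"
  proof -
    have "m x r \<le> \<epsilon> *\<^sub>R x" using m_monoR[OF x(2) r(4)] by (simp add: m_scaleR)
    then have "W (m x r) \<le> \<epsilon> *\<^sub>R W x" using mono[OF products(3) E_scaleR[OF x(1)]]
      by (simp add: scaleR x(1))
    moreover have "m (W x) r \<le> \<epsilon> *\<^sub>R W x" using m_monoR[OF nonneg[OF x] r(4)] by (simp add: m_scaleR)
    ultimately show ?thesis
      unfolding averaging_defect_def using nonneg[OF products(3)] m_nonneg[OF x(2) r(3)]
        m_nonneg[OF nonneg[OF x] r(3)]
      by (intro vabs_diff_le_of_nonneg) simp_all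
  qed
  ultimately show ?thesis
    using IH P.vabs_add_le averaging_defect_in_E products E_scaleR[OF closed[OF x(1)]]
    unfolding k'_def by metis
qed

end

context ce_f_algebra
begin

lemma averaging_defect_le:
  assumes x: "x \<in> E" "0 \<le> x" and eps: "0 < \<epsilon>"
    and k: "k \<in> W ` E" "0 \<le> k" "k \<le> (real M * \<epsilon>) *\<^sub>R e"
  shows "vabs (averaging_defect x k) \<le> \<epsilon> *\<^sub>R W x"
  using k
proof (induction M arbitrary: k)
  case 0
  then have "k = 0" by (simp add: antisym)
  then show ?case using eps nonneg[OF x] by (simp add: scaleR_nonneg_nonneg)
next
  case (Suc M)
  have "pprt (k - \<epsilon> *\<^sub>R e) \<le> (real M * \<epsilon>) *\<^sub>R e"
  proof -
    have "pprt (k - \<epsilon> *\<^sub>R e) \<le> pprt ((real M * \<epsilon>) *\<^sub>R e)"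
      using Suc.prems(3) by (intro pprt_mono) (simp add: algebra_simps)
    then show ?thesis using eps by (simp add: scaleR_nonneg_nonneg)
  qed
  then have "vabs (averaging_defect x (pprt (k - \<epsilon> *\<^sub>R e))) \<le> \<epsilon> *\<^sub>R W x"
    using Suc.prems(1) by (intro Suc.IH range_pprt range_diff range_scaleR unit_in_range) simp_all
  then show ?case using averaging_defect_step[OF x eps Suc.prems] by blast
qed

lemma averaging_nonneg_bounded:
  assumes x: "x \<in> E" "0 \<le> x" and k: "k \<in> W ` E" "0 \<le> k" "k \<le> c *\<^sub>R e"
  shows "W (m x k) = m (W x) k"
proof -
  have "vabs (averaging_defect x k) = 0"
  proof (rule nonneg_eq_0_if_le_all_eps)
    fix \<epsilon> :: real assume eps: "0 < \<epsilon>"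
    define M where "M = nat \<lceil>c / \<epsilon>\<rceil>"
    have "c \<le> real M * \<epsilon>" using eps real_nat_ceiling_ge[of "c / \<epsilon>"] unfolding M_def
      by (simp add: field_simps)
    then have "k \<le> (real M * \<epsilon>) *\<^sub>R e" using k(3) by (meson e_nonneg order_trans scaleR_right_mono)
    then show "vabs (averaging_defect x k) \<le> \<epsilon> *\<^sub>R W x"
      using averaging_defect_le[OF x eps k(1,2)] by blast
  qed simp
  then show ?thesis unfolding averaging_defect_def by (simp add: vabs_eq_0_iff)
qed

lemma averaging_bounded:
  assumes x: "x \<in> E" and k: "k \<in> W ` E" "vabs k \<le> c *\<^sub>R e"
  shows "W (m x k) = m (W x) k"
proof -
  have kE: "k \<in> E" using k(1) by (rule range_subset)
  have nonneg_x: "W (m y l) = m (W y) l"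
    if y: "y \<in> E" "0 \<le> y" and l: "l \<in> W ` E" "vabs l \<le> c *\<^sub>R e" for y l
  proof -
    have lE: "l \<in> E" using l(1) by (rule range_subset)
    have l': "pprt l \<in> W ` E" "0 \<le> pprt l" "pprt l \<le> c *\<^sub>R e"
      "- nprt l \<in> W ` E" "0 \<le> - nprt l" "- nprt l \<le> c *\<^sub>R e"
      using l range_pprt range_nprt range_uminus
        order_trans[OF pprt_le_vabs l(2)] order_trans[OF minus_nprt_le_vabs l(2)] by auto
    have "m y l = m y (pprt l + nprt l)" by (simp only: prts[symmetric])
    then have "W (m y l) = W (m y (pprt l) - m y (- nprt l))" by (simp add: m_addR m_minusR)
    also have "\<dots> = W (m y (pprt l)) - W (m y (- nprt l))"
      using m_in_E[OF y(1) range_subset[OF l'(1)], of c] m_in_E[OF y(1) range_subset[OF l'(4)], of c] l'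
        vabs_of_nonneg[OF l'(5)]
      by (intro diff) simp_all
    also have "\<dots> = m (W y) (pprt l) - m (W y) (- nprt l)"
      using averaging_nonneg_bounded[OF y] l' by simp
    also have "\<dots> = m (W y) (pprt l + nprt l)" by (simp add: m_addR m_minusR)
    also have "\<dots> = m (W y) l" by (simp only: prts[symmetric])
    finally show ?thesis .
  qed
  have x': "pprt x \<in> E" "0 \<le> pprt x" "- nprt x \<in> E" "0 \<le> - nprt x"
    using x E_pprt E_nprt E_uminus by simp_all
  have "m x k = m (pprt x + nprt x) k" by (simp only: prts[symmetric])
  then have "W (m x k) = W (m (pprt x) k - m (- nprt x) k)" by (simp add: m_addL m_minusL)
  also have "\<dots> = W (m (pprt x) k) - W (m (- nprt x) k)"
    using m_in_E[OF x'(1) kE k(2)] m_in_E[OF x'(3) kE k(2)] by (rule diff)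
  also have "\<dots> = m (W (pprt x)) k - m (W (- nprt x)) k"
    using nonneg_x x' k by simp
  also have "\<dots> = m (W (pprt x - (- nprt x))) k" using diff[OF x'(1,3)] by (simp add: m_diffL)
  also have "\<dots> = m (W x) k" by (simp add: prts[symmetric])
  finally show ?thesis .
qed

lemma averaging_bounded_left:
  assumes "x \<in> E" "k \<in> W ` E" "vabs k \<le> c *\<^sub>R e"
  shows "W (m k x) = m k (W x)"
proof -
  interpret flip: ce_f_algebra E e W "\<lambda>x y. m y x"
    by (intro_locales; (rule f_algebra_flip)?) (simp add: f_algebra_axioms)
  show ?thesis using flip.averaging_bounded[OF assms] .
qed

end

context dc_riesz_subspace
begin

lemma eq_0_if_vdisj_truncations:
  assumes z: "z \<in> E" and v: "0 \<le> v" and disj: "\<And>N::nat. vdisj z (pprt (real N *\<^sub>R e - v))"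
  shows "z = 0"
proof -
  define u where "u = inf (vabs z) e"
  have "u = 0"
  proof (rule nonneg_eq_0_if_multiples_le)
    show "0 \<le> u" unfolding u_def by simp
    fix N :: nat
    show "real N *\<^sub>R u \<le> v"
    proof (cases "N = 0")
      case False
      define w where "w = pprt (real N *\<^sub>R e - v)"
      have "real N *\<^sub>R e - v \<le> w" unfolding w_def pprt_def by simp
      then have w: "0 \<le> w" "real N *\<^sub>R e \<le> w + v" "inf (vabs z) w = 0"
        using disj[of N] unfolding w_def vdisj_def by (simp_all add: diff_le_eq)
      have "real N *\<^sub>R u = inf (real N *\<^sub>R vabs z) (real N *\<^sub>R e)"
        unfolding u_def by (simp add: scaleR_inf_nonneg)
      also have "\<dots> \<le> inf (real N *\<^sub>R vabs z) w + inf (real N *\<^sub>R vabs z) v"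
        using inf_mono[OF order_refl w(2)] w(1) v
        by (intro order_trans[OF _ inf_add_le_add_inf]) (auto simp: scaleR_nonneg_nonneg)
      also have "inf (real N *\<^sub>R vabs z) w \<le> inf (real N *\<^sub>R vabs z) (real N *\<^sub>R w)"
        using False scaleR_right_mono[of 1 "real N" w] w(1) by (intro inf_mono) simp_all
      also have "\<dots> = 0" using w(3) by (simp add: scaleR_inf_nonneg[symmetric])
      finally show ?thesis by simp
    qed (simp add: v)
  qed
  then show ?thesis unfolding u_def using eq_0_if_disjoint_unit[OF z] by simp
qed

end

context ce_f_algebra
begin

lemma averaging_products:
  assumes x: "x \<in> E" "vabs x \<le> c *\<^sub>R e" and k: "k \<in> W ` E"
  shows "m x k \<in> E" "m (W x) k \<in> E"
  using m_in_E_left[OF range_subset[OF k] x]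
    m_in_E_left[OF range_subset[OF k] closed[OF x(1)] vabs_le_scaleR_unit[OF x]]
  by simp_all

lemma averaging_defect_vdisj_truncation:
  assumes x: "x \<in> E" "vabs x \<le> c *\<^sub>R e" and k: "k \<in> W ` E"
  shows "vdisj (averaging_defect x k) (pprt (real N *\<^sub>R e - vabs k))"
proof -
  obtain P where P: "band_projection E P" "P e \<in> W ` E" and bounded: "vabs (k - P k) \<le> real N *\<^sub>R e"
    and disj: "\<And>y. y \<in> E \<Longrightarrow> vdisj (P y) (pprt (real N *\<^sub>R e - vabs k))"
    using truncation_projection[OF k] by metis
  interpret P: band_proj E e P by unfold_locales (rule P(1))
  have kE: "k \<in> E" using k by (rule range_subset)
  note products = averaging_products[OF x k]
  have PkW: "P k \<in> W ` E"
    using commute_band_proj[OF P kE] fixes_range[OF k] imageI[OF P.closed[OF kE]] by metis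
  have "averaging_defect x (k - P k) = 0"
    using averaging_bounded[OF x(1) range_diff[OF k PkW] bounded] unfolding averaging_defect_def by simp
  moreover have "P (averaging_defect x k) = averaging_defect x (P k)"
    using averaging_defect_band_proj[OF P x(1) kE products] .
  moreover have "m x (P k) \<in> E" "m (W x) (P k) \<in> E"
    using band_proj_m[OF P(1) x(1) kE products(1)] band_proj_m[OF P(1) closed[OF x(1)] kE products(2)]
      P.closed products by metis+
  ultimately have "P (averaging_defect x k) = averaging_defect x k"
    using averaging_defect_diff[OF products] by simp
  then show ?thesis using disj[OF averaging_defect_in_E[OF products]] by simp
qed

text \<open>On the band where \<open>\<bar>k\<bar> \<le> N e\<close> this is the bounded case, and these bands exhaust the space.\<close>

lemma averaging:
  assumes x: "x \<in> E" "vabs x \<le> c *\<^sub>R e" and k: "k \<in> W ` E"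
  shows "W (m x k) = m (W x) k"
proof -
  have "averaging_defect x k = 0"
    using averaging_defect_vdisj_truncation[OF x k] averaging_defect_in_E[OF averaging_products[OF x k]]
    by (intro eq_0_if_vdisj_truncations[of _ "vabs k"]) simp_all
  then show ?thesis unfolding averaging_defect_def by simp
qed

end

section \<open>The estimate\<close>

context cond_expectation
begin

lemma vabs_eq_twice_pprt:
  assumes "h \<in> E" "W h = 0"
  shows "W (vabs h) = 2 *\<^sub>R W (pprt h)"
proof -
  have "vabs h = 2 *\<^sub>R pprt h - h"
    using prts[of h] by (simp add: vabs_eq_pprt_minus_nprt scaleR_2 algebra_simps)
  then show ?thesis
    using assms E_scaleR[OF E_pprt[OF assms(1)]] by (simp add: diff scaleR E_pprt)
qed

lemma band_proj_unit_interval: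
  assumes "band_projection E P" "y \<in> E" "0 \<le> y" "y \<le> e"
  shows "W (P y) \<in> E" "0 \<le> W (P y)" "W (P y) \<le> e"
proof -
  interpret P: band_proj E e P by unfold_locales (rule assms(1))
  show "W (P y) \<in> E" using P.closed[OF assms(2)] by (rule closed)
  show "0 \<le> W (P y)" using P.closed[OF assms(2)] P.nonneg[OF assms(2,3)] by (rule nonneg)
  have "W (P y) \<le> W e"
    using P.closed[OF assms(2)] e_in_E order_trans[OF P.le_self[OF assms(2,3)] assms(4)] by (rule mono)
  then show "W (P y) \<le> e" by (simp add: unit_fixed)
qed

lemma normTinf:
  assumes f: "f \<in> Linfty E W"
  shows "normTinf E W f \<in> W ` E" "0 \<le> normTinf E W f" "vabs f \<le> normTinf E W f"
proof -
  define G where "G = {g \<in> W ` E. 0 \<le> g \<and> vabs f \<le> g}"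
  have G: "G \<subseteq> W ` E" "G \<noteq> {}" "\<And>g. g \<in> G \<Longrightarrow> 0 \<le> g \<and> vabs f \<le> g"
    using f unfolding Linfty_def G_def by auto
  have "down_directed G" unfolding down_directed_def
  proof (intro ballI)
    fix g g' assume "g \<in> G" "g' \<in> G"
    then show "\<exists>z\<in>G. z \<le> g \<and> z \<le> g'"
      unfolding G_def by (intro bexI[of _ "inf g g'"]) (auto intro: range_inf)
  qed
  then have inW: "Inf G \<in> W ` E" using G by (intro range_Inf[of _ 0]) auto
  have bdd: "bdd_below G" using G(3) unfolding bdd_below_def by blast
  have "vabs f \<le> Inf G" using G by (intro cInf_greatest) auto
  moreover have "is_glb_in (W ` E) G (Inf G)"
    unfolding is_glb_in_def using inW G(2) cInf_lower[OF _ bdd] by (auto intro: cInf_greatest)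
  moreover have "normTinf E W f = Inf G"
    unfolding normTinf_def G_def[symmetric] using calculation(2) by (rule inf_in_eq)
  ultimately show "normTinf E W f \<in> W ` E" "0 \<le> normTinf E W f" "vabs f \<le> normTinf E W f"
    using inW order_trans[OF vabs_nonneg] by simp_all
qed

end

context dc_riesz_subspace
begin

lemma compatible_cond_expectation:
  assumes "cond_expectation E e T" "cond_exp E U" "compatible E T U"
  shows "cond_expectation E e U"
proof -
  interpret T: cond_expectation E e T by (rule assms(1))
  have "U e = e" using assms(3) T.unit_fixed unfolding compatible_def by (metis e_in_E)
  with assms(2) show ?thesis by unfold_locales
qed

lemma compatible_range_subset:
  assumes T: "cond_expectation E e T" and "compatible E T U"
  shows "T ` E \<subseteq> U ` E"
proof
  fix y assume "y \<in> T ` E"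
  then obtain x where "x \<in> E" "y = T x" by blast
  moreover have "T x \<in> E" using \<open>x \<in> E\<close> cond_expectation.closed[OF T] by blast
  ultimately show "y \<in> U ` E" using assms(2) unfolding compatible_def by (metis image_eqI)
qed

end

context dc_f_algebra
begin

lemma ce_f_algebraI: "cond_expectation E e W \<Longrightarrow> ce_f_algebra E e W m"
  using dc_f_algebra_axioms by (simp add: ce_f_algebra_def)

lemma alphaT_bound:
  assumes T: "cond_expectation E e T" and P: "P \<in> BP E e U" and Q: "Q \<in> BP E e V"
  shows "vabs (T (P (Q e)) - m (T (P e)) (T (Q e))) \<le> alphaT E m e T U V"
proof -
  interpret T: cond_expectation E e T by (rule T)
  define S where "S = {vabs (T (P (Q e)) - m (T (P e)) (T (Q e))) | P Q. P \<in> BP E e U \<and> Q \<in> BP E e V}"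
  have bounded: "z \<in> E \<and> z \<le> e + e" if "z \<in> S" for z
  proof -
    obtain P Q where PQ: "band_projection E P" "band_projection E Q"
      and z: "z = vabs (T (P (Q e)) - m (T (P e)) (T (Q e)))"
      using \<open>z \<in> S\<close> unfolding S_def BP_def by blast
    interpret Q: band_proj E e Q by unfold_locales (rule PQ(2))
    note PQe = T.band_proj_unit_interval[OF PQ(1) Q.unit_component]
    note Pe = T.band_proj_unit_interval[OF PQ(1) e_in_E e_nonneg order_refl]
    note Qe = T.band_proj_unit_interval[OF PQ(2) e_in_E e_nonneg order_refl]
    have prod: "0 \<le> m (T (P e)) (T (Q e))" "m (T (P e)) (T (Q e)) \<le> e"
      using m_nonneg[OF Pe(2) Qe(2)] m_monoL[OF Qe(2) Pe(3)] Qe(3) by simp_all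
    moreover have "m (T (P e)) (T (Q e)) \<in> E" using m_in_E[OF Pe(1) Qe(1), of 1] Qe by simp
    moreover have "z \<le> vabs (T (P (Q e))) + vabs (m (T (P e)) (T (Q e)))"
      unfolding z by (rule vabs_diff_le)
    ultimately show ?thesis
      unfolding z using PQe E_vabs[OF E_diff] order_trans[OF _ add_mono[OF PQe(3) prod(2)]] by simp
  qed
  have PQ: "vabs (T (P (Q e)) - m (T (P e)) (T (Q e))) \<in> S" unfolding S_def using P Q by blast
  have "S \<subseteq> E" "S \<noteq> {}" "\<And>z. z \<in> S \<Longrightarrow> z \<le> e + e" using bounded PQ by blast+
  then have "alphaT E m e T U V = Sup S"
    unfolding alphaT_def S_def[symmetric] by (intro sup_in_eq E_Sup(2)[OF _ _ E_add[OF e_in_E e_in_E]])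
  moreover have "bdd_above S" using bounded unfolding bdd_above_def by blast
  ultimately show ?thesis using PQ by (simp add: cSup_upper)
qed

end

lemma (in ce_f_algebra) mult_le_majorant:
  assumes r: "r \<in> E" "vabs r \<le> c *\<^sub>R e" and f: "f \<in> E" and K: "K \<in> W ` E" "vabs f \<le> K"
  shows "W (m r f) \<le> m (W (vabs r)) K"
proof -
  have KE: "K \<in> E" using K(1) by (rule range_subset)
  have vr: "vabs r \<in> E" "vabs (vabs r) \<le> c *\<^sub>R e" using r E_vabs by simp_all
  have "m r f \<le> m (vabs r) K"
    using m_le_m_vabs[of r f] m_monoR[OF vabs_nonneg K(2)] by (rule order_trans)
  then have "W (m r f) \<le> W (m (vabs r) K)"
    using m_in_E_left[OF f r] m_in_E_left[OF KE vr] by (intro mono)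
  also have "\<dots> = m (W (vabs r)) K" using averaging[OF vr K(1)] .
  finally show ?thesis .
qed

context dc_f_algebra
begin

lemma T_band_proj_diff:
  assumes T: "cond_expectation E e T" and U: "cond_expectation E e U" and V: "cond_expectation E e V"
    and TU: "compatible E T U" and TV: "compatible E T V"
    and P: "band_projection E P" "P e \<in> U ` E" and f: "f \<in> V ` E"
  shows "T (P (U f - T f)) = T (m (V (P e) - T (P e)) f)"
proof -
  interpret T: ce_f_algebra E e T m by (rule ce_f_algebraI[OF T])
  interpret U: cond_expectation E e U by (rule U)
  interpret V: ce_f_algebra E e V m by (rule ce_f_algebraI[OF V])
  interpret P: band_proj E e P by unfold_locales (rule P(1))
  define p where "p = P e"
  have fE: "f \<in> E" using f by (rule V.range_subset)
  have p: "p \<in> E" "vabs p \<le> 1 *\<^sub>R e" unfolding p_def using P.unit_component by simp_all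
  have Tp: "T p \<in> T ` E" "vabs (T p) \<le> 1 *\<^sub>R e" using p T.vabs_le_scaleR_unit[OF p] by simp_all
  have Vp: "V p \<in> E" "vabs (V p) \<le> 1 *\<^sub>R e" using V.closed[OF p(1)] V.vabs_le_scaleR_unit[OF p]
    by simp_all
  have products: "m (V p) f \<in> E" "m (T p) f \<in> E"
    using m_in_E_left[OF fE Vp] m_in_E_left[OF fE T.range_subset[OF Tp(1)] Tp(2)] by simp_all
  have "T (P (U f)) = T (P f)"
    using U.commute_band_proj[OF P fE, symmetric] TU P.closed[OF fE] unfolding compatible_def by simp
  also have "\<dots> = T (V (m p f))"
    using m_component(1)[OF P(1) fE] TV m_in_E_left[OF fE p] unfolding p_def compatible_def by simp
  also have "\<dots> = T (m (V p) f)" using V.averaging[OF p f] by simp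
  finally have Uf: "T (P (U f)) = T (m (V p) f)" .
  have "T (P (T f)) = m (T p) (T f)"
    using m_component(1)[OF P(1) T.closed[OF fE]] T.averaging[OF p imageI[OF fE]] unfolding p_def
      by simp
  also have "\<dots> = T (m (T p) f)" using T.averaging_bounded_left[OF fE Tp] by simp
  finally have Tf: "T (P (T f)) = T (m (T p) f)" .
  have "T (P (U f - T f)) = T (P (U f)) - T (P (T f))"
    using U.closed[OF fE] T.closed[OF fE] P.closed by (simp add: P.diff T.diff)
  also have "\<dots> = T (m (V p - T p) f)"
    unfolding Uf Tf using products by (simp add: T.diff m_diffL)
  finally show ?thesis unfolding p_def .
qed

lemma T_vabs_range_diff_le:
  assumes T: "cond_expectation E e T" and V: "cond_expectation E e V" and TV: "compatible E T V"
    and P: "P \<in> BP E e U"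
  shows "T (vabs (V (P e) - T (P e))) \<le> 2 *\<^sub>R alphaT E m e T U V"
proof -
  interpret T: ce_f_algebra E e T m by (rule ce_f_algebraI[OF T])
  interpret V: cond_expectation E e V by (rule V)
  have Pb: "band_projection E P" using P unfolding BP_def by simp
  interpret P: band_proj E e P by unfold_locales (rule Pb)
  define p r where "p = P e" and "r = V p - T p"
  have p: "p \<in> E" "vabs p \<le> 1 *\<^sub>R e" unfolding p_def using P.unit_component by simp_all
  have Tp: "T p \<in> T ` E" "T p \<in> E" "vabs (T p) \<le> 1 *\<^sub>R e"
    using p T.vabs_le_scaleR_unit[OF p] T.closed[OF p(1)] by simp_all
  have rE: "r \<in> E" unfolding r_def using p(1) V.closed T.closed by (simp add: E_diff)
  have rV: "r \<in> V ` E"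
    unfolding r_def using compatible_range_subset[OF T TV] Tp(1) p(1) by (intro V.range_diff) auto
  have Tr: "T r = 0" unfolding r_def using TV p(1) V.closed[OF p(1)] Tp(2) T.fixes_range[OF Tp(1)]
    unfolding compatible_def by (simp add: T.diff)
  obtain Q where Q: "band_projection E Q" "Q e \<in> V ` E" "Q r = pprt r"
    using V.sign_projection[OF rV] by metis
  interpret Q: band_proj E e Q by unfold_locales (rule Q(1))
  have "T (Q (V p)) = T (P (Q e))"
  proof -
    have "Q p = P (Q e)" unfolding p_def
      using m_component(2)[OF Q(1) P.closed[OF e_in_E]] m_component(1)[OF Pb Q.closed[OF e_in_E]]
        by simp
    then show ?thesis
      using V.commute_band_proj[OF Q(1,2) p(1), symmetric] TV Q.closed[OF p(1)] unfolding compatible_def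
        by simp
  qed
  moreover have "T (Q (T p)) = m (T p) (T (Q e))"
    using m_component(2)[OF Q(1) Tp(2)] T.averaging_bounded_left[OF Q.closed[OF e_in_E] Tp(1,3)] by simp
  moreover have "T (Q r) = T (Q (V p)) - T (Q (T p))"
    unfolding r_def using V.closed[OF p(1)] Tp(2) Q.closed
    by (simp only: Q.diff T.diff)
  ultimately have "T (Q r) \<le> vabs (T (P (Q e)) - m (T (P e)) (T (Q e)))"
    unfolding p_def by (simp add: vabs_ge)
  also have "\<dots> \<le> alphaT E m e T U V"
    using Q by (intro alphaT_bound[OF T P]) (simp add: BP_def)
  finally show ?thesis
    using T.vabs_eq_twice_pprt[OF rE Tr] Q(3) unfolding r_def p_def by (simp add: scaleR_left_mono)
qed

lemma normT1_diff_eq: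
  assumes T: "cond_expectation E e T" and U: "cond_expectation E e U" and V: "cond_expectation E e V"
    and TU: "compatible E T U" and TV: "compatible E T V" and f: "f \<in> V ` E"
  obtains P where "P \<in> BP E e U" "normT1 T (U f - T f) = 2 *\<^sub>R T (m (V (P e) - T (P e)) f)"
proof -
  interpret T: cond_expectation E e T by (rule T)
  interpret U: cond_expectation E e U by (rule U)
  have fE: "f \<in> E" using f by (rule cond_expectation.range_subset[OF V])
  have h: "U f - T f \<in> U ` E"
    using compatible_range_subset[OF T TU] fE f by (intro U.range_diff) auto
  obtain P where P: "band_projection E P" "P e \<in> U ` E" "P (U f - T f) = pprt (U f - T f)"
    using U.sign_projection[OF h] by metis
  have "T (U f - T f) = 0"
    using TU fE U.closed[OF fE] T.closed[OF fE] T.fixes_range[OF imageI[OF fE]]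
    unfolding compatible_def by (simp add: T.diff)
  then have "normT1 T (U f - T f) = 2 *\<^sub>R T (m (V (P e) - T (P e)) f)"
    unfolding normT1_def using T.vabs_eq_twice_pprt U.range_subset[OF h] P(3)
      T_band_proj_diff[OF T U V TU TV P(1,2) f] by simp
  then show ?thesis using that P(1,2) unfolding BP_def by blast
qed

lemma normT1_diff_le:
  assumes T: "cond_expectation E e T" and U: "cond_expectation E e U" and V: "cond_expectation E e V"
    and TU: "compatible E T U" and TV: "compatible E T V" and f: "f \<in> V ` E" "f \<in> Linfty E T"
  shows "normT1 T (U f - T f) \<le> (4::real) *\<^sub>R m (alphaT E m e T U V) (normTinf E T f)"
proof -
  interpret T: ce_f_algebra E e T m by (rule ce_f_algebraI[OF T])
  interpret V: cond_expectation E e V by (rule V)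
  obtain P where P: "P \<in> BP E e U" and eq: "normT1 T (U f - T f) = 2 *\<^sub>R T (m (V (P e) - T (P e)) f)"
    using normT1_diff_eq[OF T U V TU TV f(1)] by metis
  interpret P: band_proj E e P using P by unfold_locales (simp add: BP_def)
  define r K where "r = V (P e) - T (P e)" and "K = normTinf E T f"
  have K: "K \<in> T ` E" "0 \<le> K" "vabs f \<le> K" unfolding K_def using T.normTinf[OF f(2)] by simp_all
  have "vabs (V (P e)) \<le> 1 *\<^sub>R e" "vabs (T (P e)) \<le> 1 *\<^sub>R e"
    using P.unit_component by (intro V.vabs_le_scaleR_unit T.vabs_le_scaleR_unit; simp)+
  then have r: "r \<in> E" "vabs r \<le> 2 *\<^sub>R e"
    unfolding r_def using P.unit_component(1) order_trans[OF vabs_diff_le add_mono]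
    by (simp_all add: E_diff V.closed T.closed scaleR_2)
  have "normT1 T (U f - T f) \<le> 2 *\<^sub>R m (T (vabs r)) K"
    using T.mult_le_majorant[OF r V.range_subset[OF f(1)] K(1,3)] unfolding eq r_def
    by (simp add: scaleR_left_mono)
  also have "\<dots> \<le> 2 *\<^sub>R m (2 *\<^sub>R alphaT E m e T U V) K"
    using T_vabs_range_diff_le[OF T V TV P] m_monoL[OF K(2)] unfolding r_def
    by (simp add: scaleR_left_mono)
  finally show ?thesis unfolding K_def by (simp add: m_scaleL)
qed

end

theorem theorem4p7:
  fixes E :: "'a::{ordered_real_vector,lattice_ab_group_add,conditionally_complete_lattice} set"
    and m :: "'a \<Rightarrow> 'a \<Rightarrow> 'a"
    and e :: 'a
    and T U V :: "'a \<Rightarrow> 'a"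
    and f :: 'a
  assumes E_riesz: "riesz_subspace E"
    and E_dc: "dedekind_complete_in E"
    and E_dense: "order_dense E"
    and univ_lat: "laterally_complete TYPE('a)"
    and falg: "f_algebra_unit m e"
    and e_unit: "weak_order_unit_in E e"
    and T_ce: "cond_exp E T"
    and Te: "T e = e"
    and T_uc: "T_universally_complete E T"
    and U_ce: "cond_exp E U"
    and V_ce: "cond_exp E V"
    and U_comp: "compatible E T U"
    and V_comp: "compatible E T V"
    and f_RV: "f \<in> V ` E"
    and f_inf: "f \<in> Linfty E T"
  shows "normT1 T (U f - T f) \<le> (4::real) *\<^sub>R m (alphaT E m e T U V) (normTinf E T f)"
proof -
  interpret dc_f_algebra E e m
    using E_riesz E_dc E_dense e_unit falg by unfold_locales (simp_all add: f_algebra_def)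
  have T: "cond_expectation E e T" using T_ce Te by unfold_locales
  show ?thesis
    using normT1_diff_le[OF T compatible_cond_expectation[OF T U_ce U_comp]
        compatible_cond_expectation[OF T V_ce V_comp] U_comp V_comp f_RV f_inf] .
qed

end
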